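(* Fix an integer $k>0$. In the two-type population dependent branching process with parameters $p\in(0,1]$, $q\in[0,1]$, let $n_{k,A}(t)$ be the number of type $A$ individuals with exactly $k$ offspring at time $t$ and $n(t)=n_A(t)+n_B(t)$. Then $n_{k,A}(t)/n(t)\to p_{k,A}$ in probability as $t\to\infty$, where $$p_{k,A}=p\int_0^\infty\mathbb{P}(\mathrm{Poisson}(r_A^*s)=k)e^{-s}\,ds=\frac{p}{1+r_A^*}\left(\frac{r_A^*}{1+r_A^*}\right)^k,\qquad r_A^*=q+\frac{(1-p)(1-q)}{p}.$$ Consequently, for the two-type CMRT $\{\mathcal{T}_n\}_{n\ge2}$ with the same parameters, if $N_{k,A}(n)$ denotes the number of type $A$ vertices of out-degree $k$ in $\mathcal{T}_n$, then $N_{k,A}(n)/n\to p_{k,A}$ in probability as $n\to\infty$.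
   Context: Population dependent branching process: a continuous-time Markov process started at time $0$ with two individuals, one of type $A$ and one of type $B$; individuals live forever. Let $n_A(t), n_B(t)$ be the numbers of type $A$, $B$ individuals at time $t$ ($n_A(0)=n_B(0)=1$). At time $t$, each type $A$ individual gives birth to type $A$ individuals at rate $q$ and to type $B$ individuals at rate $(1-p)(1-q)/p$; each type $B$ individual gives birth to type $A$ individuals at rate $\frac{n_A(t)}{n_B(t)}(1-q)$ and to type $B$ individuals at rate $\frac{n_A(t)}{n_B(t)}\cdot\frac{q(1-p)}{p}$. Two-type CMRT with parameters $p,q$: $\mathcal{T}_2$ consists of vertex $1$ of type $A$ and vertex $2$ of type $B$ joined by an edge. For $n\ge 3$, $\mathcal{T}_n$ is obtained from $\mathcal{T}_{n-1}$ by adding vertex $n$: (1) it is of type $A$ with probability $p$ and of type $B$ otherwise; (2) with probability $q$ it decides to connect to a vertex of its own type, otherwise to a vertex of the other type; (3) it connects by an edge to a uniformly random existing vertex of the selected type. All choices independent. Out-degree of a vertex = number of children (later vertices attached to it). *)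

theory Defs
  imports "HOL-Probability.Probability"
begin

text \<open>A two-type CMRT is stored as a list of vertices; entry i (0-based, i.e. paper vertex i+1)
  is a pair (is_type_A, parent).  The two initial vertices have no parent; every later vertex
  records the existing vertex it connected to.\<close>
type_synonym cmrt = "(bool \<times> nat option) list"

text \<open>Randomness for one step: (new vertex is of type A, connects to own type,
  uniform number in [0,1) selecting the target vertex, Exp(1) variable for the holding time).\<close>
type_synonym step_rand = "bool \<times> bool \<times> real \<times> real"

definition step_measure :: "real \<Rightarrow> real \<Rightarrow> step_rand measure" where
  "step_measure p q =
     measure_pmf (bernoulli_pmf p) \<Otimes>\<^sub>M (measure_pmf (bernoulli_pmf q) \<Otimes>\<^sub>M
       (uniform_measure lborel {0..<1} \<Otimes>\<^sub>M density lborel (exponential_density 1)))"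

definition cmrt_space :: "real \<Rightarrow> real \<Rightarrow> (nat \<Rightarrow> step_rand) measure" where
  "cmrt_space p q = PiM UNIV (\<lambda>_::nat. step_measure p q)"

definition cmrt_init :: cmrt where
  "cmrt_init = [(True, None), (False, None)]"

definition cmrt_add :: "cmrt \<Rightarrow> step_rand \<Rightarrow> cmrt" where
  "cmrt_add T r = (case r of (a, s, u, e) \<Rightarrow>
     (let tgt = (if s then a else \<not> a);
          cs = filter (\<lambda>i. fst (T ! i) = tgt) [0..<length T]
      in T @ [(a, Some (cs ! nat \<lfloor>u * real (length cs)\<rfloor>))]))"

text \<open>cmrt_seq w m is the tree with m+2 vertices.\<close>
fun cmrt_seq :: "(nat \<Rightarrow> step_rand) \<Rightarrow> nat \<Rightarrow> cmrt" where
  "cmrt_seq w 0 = cmrt_init"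
| "cmrt_seq w (Suc m) = cmrt_add (cmrt_seq w m) (w m)"

text \<open>The paper's T_n (n \<ge> 2), with n vertices.\<close>
definition cmrt_tree :: "(nat \<Rightarrow> step_rand) \<Rightarrow> nat \<Rightarrow> cmrt" where
  "cmrt_tree w n = cmrt_seq w (n - 2)"

definition num_A :: "cmrt \<Rightarrow> nat" where
  "num_A T = length (filter fst T)"

definition outdeg :: "cmrt \<Rightarrow> nat \<Rightarrow> nat" where
  "outdeg T v = card {j. j < length T \<and> snd (T ! j) = Some v}"

definition NkA :: "nat \<Rightarrow> cmrt \<Rightarrow> nat" where
  "NkA k T = card {v. v < length T \<and> fst (T ! v) \<and> outdeg T v = k}"

text \<open>In a state with n_A type A
  individuals the total birth rate is n_A/p (sum of the four rates in the model), and the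
  embedded jump chain is exactly the CMRT; the holding time is p*E/n_A with E ~ Exp(1).\<close>
definition hold :: "real \<Rightarrow> (nat \<Rightarrow> step_rand) \<Rightarrow> nat \<Rightarrow> real" where
  "hold p w m = p * snd (snd (snd (w m))) / real (num_A (cmrt_seq w m))"

definition jump_time :: "real \<Rightarrow> (nat \<Rightarrow> step_rand) \<Rightarrow> nat \<Rightarrow> real" where
  "jump_time p w m = (\<Sum>j<m. hold p w j)"

definition bp_state :: "real \<Rightarrow> (nat \<Rightarrow> step_rand) \<Rightarrow> real \<Rightarrow> cmrt" where
  "bp_state p w t = cmrt_seq w (LEAST m. t < jump_time p w (Suc m))"

definition poisson_prob :: "real \<Rightarrow> nat \<Rightarrow> real" where
  "poisson_prob lam k = lam ^ k / fact k * exp (- lam)"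

end

theory Submission
  imports Defs "HOL-Library.Discrete_Functions"
begin

(* The jump chain of the branching process is the CMRT, and from a tree with n_A type A
   vertices the total birth rate is n_A / p, so the holding times are p E_j / n_A with i.i.d.
   Exp(1) variables E_j.  Given the tree, the new vertex attaches to a uniformly chosen type A
   vertex with probability rho = p q + (1 - p) (1 - q), and is itself a childless type A vertex
   with probability p.  Hence N_k,A grows by rho (N_k-1,A - N_k,A) / n_A + p [k = 0] in
   expectation, up to bounded martingale differences, whose averages vanish almost surely
   (second moments, then Borel-Cantelli along the squares).  As n_A(m) / m -> p, a stochastic
   approximation argument gives N_k,A(m) / m -> (p [k = 0] + r p_k-1,A) / (1 + r) with
   r = rho / p, which is p_k,A by induction on k.  A positive fraction of the E_j exceed 1, so
   the jump times diverge and the continuous-time process runs through the whole chain; almost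
   sure convergence then gives convergence in probability. *)

section \<open>Deterministic limit theorems\<close>

lemma abs_diff_le_of_bounded_increments:
  fixes s :: "nat \<Rightarrow> real"
  assumes "\<And>m. \<bar>s (Suc m) - s m\<bar> \<le> B"
  shows "\<bar>s (a + d) - s a\<bar> \<le> B * d"
proof (induction d)
  case (Suc d)
  have "\<bar>s (a + Suc d) - s a\<bar> \<le> \<bar>s (Suc (a + d)) - s (a + d)\<bar> + \<bar>s (a + d) - s a\<bar>" by simp
  also have "\<dots> \<le> B + B * d" using assms[of "a + d"] Suc by linarith
  finally show ?case by (simp add: algebra_simps)
qed simp

text \<open>A sequence with bounded increments is determined up to \<open>o(m)\<close> by its values at the
  squares, since the gap between consecutive squares is \<open>O(\<surd>m)\<close>.\<close>

lemma LIMSEQ_div_of_bounded_increments_squares: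
  fixes s :: "nat \<Rightarrow> real"
  assumes inc: "\<And>m. \<bar>s (Suc m) - s m\<bar> \<le> B"
    and squares: "(\<lambda>n. s (n\<^sup>2) / n\<^sup>2) \<longlonglongrightarrow> 0"
  shows "(\<lambda>m. s m / m) \<longlonglongrightarrow> 0"
proof (rule LIMSEQ_I)
  fix r :: real assume r: "0 < r"
  have B0: "0 \<le> B" using inc[of 0] by linarith
  obtain N where N: "\<And>n. n \<ge> N \<Longrightarrow> \<bar>s (n\<^sup>2) / n\<^sup>2\<bar> < r / 2"
    using LIMSEQ_D[OF squares, of "r / 2"] r by auto
  obtain K :: nat where K: "4 * B / r < K" using reals_Archimedean2 by blast
  show "\<exists>m0. \<forall>m\<ge>m0. norm (s m / m - 0) < r"
  proof (intro exI allI impI)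
    fix m assume m: "m \<ge> (Suc (max N K))\<^sup>2"
    define n where "n = floor_sqrt m"
    have n_le: "n\<^sup>2 \<le> m" and n_gt: "m < (Suc n)\<^sup>2"
      unfolding n_def by (simp_all add: Suc_floor_sqrt_power2_gt)
    have nN: "Suc (max N K) \<le> n" unfolding n_def using m by (simp add: le_floor_sqrtI)
    then have n0: "0 < real n" by simp
    have "\<bar>s m - s (n\<^sup>2)\<bar> \<le> B * (m - n\<^sup>2)"
      using abs_diff_le_of_bounded_increments[of s B "n\<^sup>2" "m - n\<^sup>2", OF inc] n_le by simp
    also have "\<dots> \<le> B * (2 * n)"
    proof -
      have "m - n\<^sup>2 \<le> 2 * n" using n_gt by (simp add: power2_eq_square)
      then show ?thesis using B0 by (intro mult_left_mono) linarith+
    qed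
    finally have "\<bar>s m\<bar> / m \<le> (\<bar>s (n\<^sup>2)\<bar> + B * (2 * n)) / n\<^sup>2"
      using n_le n0 by (intro frac_le) (simp_all flip: of_nat_power)
    also have "\<dots> = \<bar>s (n\<^sup>2) / n\<^sup>2\<bar> + 2 * B / n"
      using n0 by (simp add: field_simps power2_eq_square)
    also have "2 * B / n < r / 2"
    proof -
      have "4 * B / r < n" using K nN by linarith
      then show ?thesis using r n0 by (simp add: field_simps)
    qed
    finally (order_le_less_subst1) have "\<bar>s m\<bar> / m < \<bar>s (n\<^sup>2) / n\<^sup>2\<bar> + r / 2" by simp
    moreover have "\<bar>s (n\<^sup>2) / n\<^sup>2\<bar> < r / 2" using N nN by simp
    ultimately show "norm (s m / m - 0) < r" by (simp only: real_norm_def diff_0_right abs_divide abs_of_nat)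
  qed
qed

lemma abs_convex_recursion_le:
  fixes a al be :: "nat \<Rightarrow> real"
  assumes rec: "\<And>m. m \<ge> M \<Longrightarrow> a (Suc m) = (1 - al m) * a m + al m * be m"
    and al: "\<And>m. m \<ge> M \<Longrightarrow> 1 / (real m + 1) \<le> al m \<and> al m \<le> 1"
    and be: "\<And>m. m \<ge> M \<Longrightarrow> \<bar>be m - b\<bar> \<le> eps" and M: "0 < M"
  shows "\<bar>a (M + d) - b\<bar> \<le> eps + \<bar>a M - b\<bar> * M / (M + d)"
proof (induction d)
  case 0
  show ?case using M be[of M] by simp
next
  case (Suc d)
  define m where "m = M + d"
  define K where "K = \<bar>a M - b\<bar> * M"
  have m: "M \<le> m" "0 < m" using M unfolding m_def by auto
  have IH: "\<bar>a m - b\<bar> \<le> eps + K / m" using Suc unfolding m_def K_def .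
  have alm: "1 / (real m + 1) \<le> al m" "al m \<le> 1" using al[OF m(1)] by auto
  then have al0: "0 \<le> al m" "0 \<le> 1 - al m" using order_trans[OF _ alm(1)] by auto
  have "a (Suc m) - b = (1 - al m) * (a m - b) + al m * (be m - b)"
    using rec[OF m(1)] by (simp add: algebra_simps)
  then have "\<bar>a (Suc m) - b\<bar> \<le> (1 - al m) * \<bar>a m - b\<bar> + al m * \<bar>be m - b\<bar>"
    using al0 abs_triangle_ineq by (metis abs_mult abs_of_nonneg)
  also have "\<dots> \<le> (1 - al m) * (eps + K / m) + al m * eps"
    by (intro add_mono mult_left_mono IH be m al0)
  also have "\<dots> = eps + (1 - al m) * (K / m)" by (simp add: algebra_simps)
  also have "(1 - al m) * (K / m) \<le> (real m / (real m + 1)) * (K / m)"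
  proof (rule mult_right_mono)
    have "1 - al m \<le> 1 - 1 / (real m + 1)" using alm by simp
    also have "\<dots> = real m / (real m + 1)" by (simp add: field_simps)
    finally show "1 - al m \<le> real m / (real m + 1)" .
  qed (simp add: K_def)
  also have "(real m / (real m + 1)) * (K / m) = K / (m + 1)"
    using m by simp
  finally show ?case by (simp add: m_def K_def add.commute)
qed

lemma LIMSEQ_of_convex_recursion:
  fixes a al be :: "nat \<Rightarrow> real"
  assumes rec: "\<And>m. m \<ge> M \<Longrightarrow> a (Suc m) = (1 - al m) * a m + al m * be m"
    and al: "\<And>m. m \<ge> M \<Longrightarrow> 1 / (real m + 1) \<le> al m \<and> al m \<le> 1"
    and be: "be \<longlonglongrightarrow> b"
  shows "a \<longlonglongrightarrow> b"
proof (rule LIMSEQ_I)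
  fix r :: real assume r: "0 < r"
  obtain M0 where M0: "\<And>m. m \<ge> M0 \<Longrightarrow> \<bar>be m - b\<bar> < r / 2"
    using LIMSEQ_D[OF be, of "r / 2"] r by auto
  define M1 where "M1 = max (max M M0) 1"
  define K where "K = \<bar>a M1 - b\<bar> * M1"
  have bound: "\<bar>a (M1 + d) - b\<bar> \<le> r / 2 + K / (M1 + d)" for d
    unfolding K_def
    by (rule abs_convex_recursion_le[where al = al and be = be])
      (use rec al M0 in \<open>auto simp: M1_def less_imp_le\<close>)
  obtain N :: nat where N: "K / (r / 2) < N" using reals_Archimedean2 by blast
  show "\<exists>n0. \<forall>n\<ge>n0. norm (a n - b) < r"
  proof (intro exI allI impI)
    fix n assume n: "n \<ge> M1 + N + 1"
    then have "K / (r / 2) < n" using N by linarith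
    then have "K / n < r / 2" using r n by (simp add: field_simps)
    moreover have "\<bar>a n - b\<bar> \<le> r / 2 + K / n" using bound[of "n - M1"] n by simp
    ultimately show "norm (a n - b) < r" by (simp only: real_norm_def)
  qed
qed

text \<open>Normalising \<open>a m = (z m - S m) / m\<close> turns the perturbed linear recursion into a convex
  recursion with step size \<open>(1 + \<rho> m / N m) / (m + 1)\<close>.\<close>

lemma LIMSEQ_div_of_linear_recursion:
  fixes z y N S :: "nat \<Rightarrow> real" and \<rho> c p ys :: real
  assumes rec: "\<And>m. z (Suc m) = z m + c + \<rho> * (y m - z m) / N m + (S (Suc m) - S m)"
    and N1: "\<And>m. 1 \<le> N m" and \<rho>: "0 \<le> \<rho>" "\<rho> \<le> 1" and p: "0 < p"
    and lim_N: "(\<lambda>m. N m / m) \<longlonglongrightarrow> p" and lim_y: "(\<lambda>m. y m / m) \<longlonglongrightarrow> ys"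
    and lim_S: "(\<lambda>m. S m / m) \<longlonglongrightarrow> 0"
  shows "(\<lambda>m. z m / m) \<longlonglongrightarrow> (c + \<rho> / p * ys) / (1 + \<rho> / p)"
proof -
  define a where "a m = (z m - S m) / m" for m
  define iN where "iN m = real m / N m" for m
  define al where "al m = (1 + \<rho> * iN m) / (real m + 1)" for m
  define be where "be m = (c + \<rho> * ((y m - S m) / m) * iN m) / (1 + \<rho> * iN m)" for m
  have N0: "0 < N m" for m using N1[of m] by linarith
  have iN0: "0 \<le> iN m" for m unfolding iN_def using N0[of m] by simp
  have "(\<lambda>m. inverse (N m / m)) \<longlonglongrightarrow> inverse p" using lim_N p by (intro tendsto_inverse) auto
  then have lim_iN: "iN \<longlonglongrightarrow> 1 / p" by (simp add: iN_def[abs_def] inverse_eq_divide)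
  have lim_yS: "(\<lambda>m. (y m - S m) / m) \<longlonglongrightarrow> ys - 0"
    unfolding diff_divide_distrib by (intro tendsto_diff lim_y lim_S)
  have "0 \<le> \<rho> / p" using p \<rho> by simp
  then have "1 + \<rho> * (1 / p) \<noteq> 0" by simp
  then have lim_be: "be \<longlonglongrightarrow> (c + \<rho> * (ys - 0) * (1 / p)) / (1 + \<rho> * (1 / p))"
    unfolding be_def by (intro tendsto_intros lim_yS lim_iN)
  have "a \<longlonglongrightarrow> (c + \<rho> * (ys - 0) * (1 / p)) / (1 + \<rho> * (1 / p))"
  proof (rule LIMSEQ_of_convex_recursion[where M=1 and al=al and be=be, OF _ _ lim_be])
    fix m :: nat assume m: "1 \<le> m"
    have iN_le: "iN m \<le> m"
      unfolding iN_def using N1[of m] N0[of m] mult_right_mono[of 1 "N m" "real m"] by (simp add: field_simps)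
    show "1 / (real m + 1) \<le> al m \<and> al m \<le> 1"
      unfolding al_def using iN0[of m] iN_le \<rho> mult_mono[of \<rho> 1 "iN m" m]
      by (auto simp: field_simps)
    have "0 \<le> \<rho> * iN m" using iN0[of m] \<rho> by simp
    then have "1 + \<rho> * iN m \<noteq> 0" by linarith
    moreover have "(1 - D / q) * A + D / q * (X / D) = (q * A - D * A + X) / q"
      if "D \<noteq> 0" "q \<noteq> 0" for D q A X :: real
      using that by (simp add: field_simps)
    ultimately have "(1 - al m) * a m + al m * be m
        = ((real m + 1) * a m - (1 + \<rho> * iN m) * a m + (c + \<rho> * ((y m - S m) / m) * iN m)) / (real m + 1)"
      unfolding al_def be_def by simp
    also have "(real m + 1) * a m - (1 + \<rho> * iN m) * a m + (c + \<rho> * ((y m - S m) / m) * iN m)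
        = z m - S m + c + \<rho> * (y m - z m) / N m"
      unfolding a_def iN_def using m N0[of m] by (simp add: field_simps)
    also have "z m - S m + c + \<rho> * (y m - z m) / N m = z (Suc m) - S (Suc m)"
      using rec[of m] by simp
    finally show "a (Suc m) = (1 - al m) * a m + al m * be m"
      unfolding a_def by (simp add: add.commute)
  qed
  then have "(\<lambda>m. a m + S m / m) \<longlonglongrightarrow> (c + \<rho> * (ys - 0) * (1 / p)) / (1 + \<rho> * (1 / p)) + 0"
    by (intro tendsto_add lim_S)
  moreover have "a m + S m / m = z m / m" for m unfolding a_def by (simp add: diff_divide_distrib)
  ultimately show ?thesis by simp
qed

lemma LIMSEQ_0_of_eventually_abs_less_inverse_Suc:
  fixes x :: "nat \<Rightarrow> real"
  assumes "\<And>e::nat. eventually (\<lambda>n. \<bar>x n\<bar> < 1 / Suc e) sequentially"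
  shows "x \<longlonglongrightarrow> 0"
proof (rule LIMSEQ_I)
  fix r :: real assume "0 < r"
  then obtain e :: nat where "1 / Suc e < r"
    using reals_Archimedean by (auto simp: inverse_eq_divide)
  with assms[of e] have "eventually (\<lambda>n. norm (x n - 0) < r) sequentially"
    by (auto elim: eventually_mono)
  then show "\<exists>n0. \<forall>n\<ge>n0. norm (x n - 0) < r" by (simp add: eventually_sequentially)
qed

lemma dyadic_block_weighted_sum_ge:
  fixes x :: "nat \<Rightarrow> real"
  assumes nonneg: "\<And>j. 0 \<le> x j" and m: "1 \<le> m"
    and avg: "\<bar>(\<Sum>j<m. x j) / m - \<mu>\<bar> < \<mu> / 8" "\<bar>(\<Sum>j<2 * m. x j) / (2 * m) - \<mu>\<bar> < \<mu> / 8"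
  shows "\<mu> / 8 \<le> (\<Sum>j\<in>{m..<2 * m}. x j / (j + 2))"
proof -
  define C where "C n = (\<Sum>j<n. x j)" for n
  have "5 * \<mu> / 8 \<le> 2 * (C (2 * m) / (2 * m)) - C m / m" using avg unfolding C_def by linarith
  then have "real m * (5 * \<mu> / 8) \<le> real m * (2 * (C (2 * m) / (2 * m)) - C m / m)"
    by (rule mult_left_mono) simp
  also have "\<dots> = C (2 * m) - C m"
    using m by (simp add: field_simps)
  also have "\<dots> = (\<Sum>j\<in>{m..<2 * m}. x j)"
    using sum.atLeastLessThan_concat[of 0 m "2 * m" x] unfolding C_def by (simp add: lessThan_atLeast0)
  finally have "real m * (5 * \<mu> / 8) / (2 * m + 2) \<le> (\<Sum>j\<in>{m..<2 * m}. x j) / (2 * m + 2)"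
    by (rule divide_right_mono) simp
  also have "\<dots> = (\<Sum>j\<in>{m..<2 * m}. x j / (2 * m + 2))" by (simp add: sum_divide_distrib)
  also have "\<dots> \<le> (\<Sum>j\<in>{m..<2 * m}. x j / (j + 2))"
    using nonneg by (intro sum_mono divide_left_mono) auto
  finally have "real m * (5 * \<mu> / 8) / (2 * m + 2) \<le> (\<Sum>j\<in>{m..<2 * m}. x j / (j + 2))" .
  moreover have "\<mu> / 8 \<le> real m * (5 * \<mu> / 8) / (2 * m + 2)"
  proof -
    have "0 < \<mu>" using avg(1) abs_ge_zero[of "(\<Sum>j<m. x j) / m - \<mu>"] by linarith
    then have "\<mu> * 2 \<le> \<mu> * (real m * 3)" using m by (intro mult_left_mono) auto
    then show ?thesis by (simp add: field_simps)
  qed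
  ultimately show ?thesis by linarith
qed

lemma weighted_sum_unbounded:
  fixes x :: "nat \<Rightarrow> real"
  assumes nonneg: "\<And>j. 0 \<le> x j" and lim: "(\<lambda>m. (\<Sum>j<m. x j) / m) \<longlonglongrightarrow> \<mu>" and \<mu>: "0 < \<mu>"
  shows "\<exists>m. t < (\<Sum>j<m. x j / (j + 2))"
proof -
  define s where "s m = (\<Sum>j<m. x j / (j + 2))" for m
  obtain M0 where M0: "\<And>m. m \<ge> M0 \<Longrightarrow> \<bar>(\<Sum>j<m. x j) / m - \<mu>\<bar> < \<mu> / 8"
    using LIMSEQ_D[OF lim, of "\<mu> / 8"] \<mu> by auto
  define M where "M = max M0 1"
  have "\<mu> / 8 \<le> s (2 * m) - s m" if "m \<ge> M" for m
  proof -
    have "\<mu> / 8 \<le> (\<Sum>j\<in>{m..<2 * m}. x j / (j + 2))"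
      using that M0[of m] M0[of "2 * m"] unfolding M_def
      by (intro dyadic_block_weighted_sum_ge[where x = x] nonneg) auto
    also have "\<dots> = s (2 * m) - s m"
      using sum.atLeastLessThan_concat[of 0 m "2 * m" "\<lambda>j. x j / (j + 2)"]
      unfolding s_def by (simp add: lessThan_atLeast0)
    finally show ?thesis .
  qed
  note block = this
  have "real i * (\<mu> / 8) \<le> s (2 ^ i * M)" for i
  proof (induction i)
    case (Suc i)
    have "M \<le> 2 ^ i * M" by simp
    from block[OF this] Suc show ?case by (simp add: algebra_simps)
  qed (simp add: s_def sum_nonneg nonneg)
  moreover obtain i :: nat where "t / (\<mu> / 8) < i" using reals_Archimedean2 by blast
  ultimately have "t < s (2 ^ i * M)" using \<mu> by (simp add: field_simps) (smt (verit))
  then show ?thesis unfolding s_def by blast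
qed

section \<open>A strong law for bounded martingale differences\<close>

context sequence_space
begin

lemma measurable_fun_upd_coordinate[measurable]:
  "w \<in> space S \<Longrightarrow> (\<lambda>x. w(j := x)) \<in> measurable M S"
  by (intro measurable_PiM_single') (auto simp: space_PiM PiE_iff)

lemma measurable_fun_upd_pair[measurable]:
  "(\<lambda>x. (fst x)(j := snd x)) \<in> measurable (S \<Otimes>\<^sub>M M) S"
proof (rule measurable_PiM_single')
  show "(\<lambda>x. ((fst x)(j := snd x)) i) \<in> measurable (S \<Otimes>\<^sub>M M) M" for i
    by (cases "i = j") auto
qed (auto simp: space_PiM PiE_iff space_pair_measure)

lemma integral_coordinate_0:
  assumes [measurable]: "f \<in> borel_measurable M"
  shows "(\<integral>w. f (w 0) \<partial>S) = (\<integral>x. (f x :: real) \<partial>M)"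
proof -
  have "(\<integral>x. f x \<partial>M) = (\<integral>x. f x \<partial>distr S M (\<lambda>w. w 0))"
    using PiM_component[of 0] by simp
  also have "\<dots> = (\<integral>w. f (w 0) \<partial>S)"
    by (subst integral_distr) auto
  finally show ?thesis ..
qed

text \<open>Orthogonality of a past-measurable factor and a centred increment: split the sequence at
  \<open>j\<close> and integrate out the coordinate \<open>j\<close> first.\<close>

lemma integral_mult_centered_eq_0:
  fixes g h :: "(nat \<Rightarrow> 'a) \<Rightarrow> real"
  assumes [measurable]: "g \<in> borel_measurable S" "h \<in> borel_measurable S"
    and g_bound: "\<And>w. \<bar>g w\<bar> \<le> B" and h_bound: "\<And>w. \<bar>h w\<bar> \<le> B"
    and g_past: "\<And>w w'. (\<forall>l<j. w l = w' l) \<Longrightarrow> g w = g w'"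
    and h_upto: "\<And>w w'. (\<forall>l\<le>j. w l = w' l) \<Longrightarrow> h w = h w'"
    and h_centered: "AE w in S. (\<integral>x. h (w(j := x)) \<partial>M) = 0"
  shows "(\<integral>w. g w * h w \<partial>S) = 0"
proof -
  interpret SS: pair_prob_space S S ..
  let ?c = "\<lambda>(w, w'). comb_seq j w w'"
  have [measurable]: "?c \<in> measurable (S \<Otimes>\<^sub>M S) S" by (rule measurable_comb_seq)
  have "(\<integral>w. g w * h w \<partial>S) = (\<integral>w. g w * h w \<partial>distr (S \<Otimes>\<^sub>M S) S ?c)"
    using PiM_comb_seq[of j] by simp
  also have "\<dots> = (\<integral>x. g (?c x) * h (?c x) \<partial>(S \<Otimes>\<^sub>M S))"
    by (subst integral_distr) auto
  also have "\<dots> = (\<integral>w. (\<integral>w'. g (?c (w, w')) * h (?c (w, w')) \<partial>S) \<partial>S)"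
  proof (rule SS.integral_fst'[symmetric], rule SS.integrable_const_bound[where B = "B * B"])
    show "AE x in S \<Otimes>\<^sub>M S. norm (g (?c x) * h (?c x)) \<le> B * B"
      using g_bound h_bound by (intro AE_I2) (simp add: abs_mult mult_mono')
  qed measurable
  also have "\<dots> = (\<integral>w. g w * (\<integral>x. h (w(j := x)) \<partial>M) \<partial>S)"
  proof (rule integral_cong_AE[OF _ _ AE_I2])
    fix w assume w: "w \<in> space S"
    have past: "g (?c (w, w')) = g w" for w'
      by (rule g_past) (auto simp: comb_seq_less)
    have now: "h (?c (w, w')) = h (w(j := w' 0))" for w'
      by (rule h_upto) (auto simp: comb_seq_def)
    have h_sect: "(\<lambda>x. h (w(j := x))) \<in> borel_measurable M"
      using w by measurable
    show "(\<integral>w'. g (?c (w, w')) * h (?c (w, w')) \<partial>S) = g w * (\<integral>x. h (w(j := x)) \<partial>M)"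
      unfolding past now by (simp add: integral_coordinate_0[OF h_sect])
  qed measurable
  also have "\<dots> = (\<integral>w. 0 \<partial>S)"
    by (rule integral_cong_AE) (use h_centered in auto)
  finally show ?thesis by simp
qed

context
  fixes g :: "nat \<Rightarrow> (nat \<Rightarrow> 'a) \<Rightarrow> real" and B :: real
  assumes g_meas[measurable]: "\<And>j. g j \<in> borel_measurable S"
    and g_bound: "\<And>j w. \<bar>g j w\<bar> \<le> B"
    and g_adapted: "\<And>j w w'. (\<forall>l\<le>j. w l = w' l) \<Longrightarrow> g j w = g j w'"
    and g_centered: "\<And>j. AE w in S. (\<integral>x. g j (w(j := x)) \<partial>M) = 0"
begin

lemma abs_martingale_sum_le: "\<bar>\<Sum>j<n. g j w\<bar> \<le> n * B"
proof -
  have "\<bar>\<Sum>j<n. g j w\<bar> \<le> (\<Sum>j<n. \<bar>g j w\<bar>)" by (rule sum_abs)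
  also have "\<dots> \<le> (\<Sum>j<n. B)" by (intro sum_mono g_bound)
  finally show ?thesis by simp
qed

lemma integrable_square_bounded:
  fixes C :: real
  assumes [measurable]: "f \<in> borel_measurable S" and "\<And>w. \<bar>f w\<bar> \<le> C"
  shows "integrable S (\<lambda>w. (f w)\<^sup>2)"
proof -
  have "(f w)\<^sup>2 \<le> C\<^sup>2" for w using power_mono[OF assms(2)[of w] abs_ge_zero, of 2] by simp
  then show ?thesis by (intro integrable_const_bound[where B = "C\<^sup>2"] AE_I2) auto
qed

lemma integral_square_martingale_sum_le: "(\<integral>w. (\<Sum>j<n. g j w)\<^sup>2 \<partial>S) \<le> n * B\<^sup>2"
proof (induction n)
  case (Suc n)
  have B0: "0 \<le> B" using g_bound[of 0 undefined] by linarith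
  let ?s = "\<lambda>w. \<Sum>j<n. g j w"
  have s_bound: "\<bar>?s w\<bar> \<le> n * B + B" for w
    using abs_martingale_sum_le[where n = n and w = w] B0 by linarith
  have g_bound': "\<bar>g n w\<bar> \<le> n * B + B" for w
    using g_bound[of n w] B0 by (simp add: add_increasing)
  have cross: "(\<integral>w. ?s w * g n w \<partial>S) = 0"
    by (rule integral_mult_centered_eq_0[OF _ _ s_bound g_bound'])
      (auto intro!: sum.cong g_adapted g_centered)
  have "integrable S (\<lambda>w. ?s w * g n w)"
    using s_bound g_bound'
    by (intro integrable_const_bound[where B = "(n * B + B) * (n * B + B)"] AE_I2)
      (auto simp: abs_mult intro!: mult_mono')
  moreover have "integrable S (\<lambda>w. (?s w)\<^sup>2)"
    by (rule integrable_square_bounded[OF _ abs_martingale_sum_le]) measurable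
  moreover have "integrable S (\<lambda>w. (g n w)\<^sup>2)"
    by (rule integrable_square_bounded[OF _ g_bound]) measurable
  ultimately have "(\<integral>w. (?s w)\<^sup>2 + 2 * (?s w * g n w) + (g n w)\<^sup>2 \<partial>S)
      = (\<integral>w. (?s w)\<^sup>2 \<partial>S) + 2 * (\<integral>w. ?s w * g n w \<partial>S) + (\<integral>w. (g n w)\<^sup>2 \<partial>S)"
    by simp
  moreover have "(\<lambda>w. (\<Sum>j<Suc n. g j w)\<^sup>2) = (\<lambda>w. (?s w)\<^sup>2 + 2 * (?s w * g n w) + (g n w)\<^sup>2)"
    by (simp add: fun_eq_iff power2_sum algebra_simps)
  ultimately have "(\<integral>w. (\<Sum>j<Suc n. g j w)\<^sup>2 \<partial>S)
      = (\<integral>w. (?s w)\<^sup>2 \<partial>S) + 2 * (\<integral>w. ?s w * g n w \<partial>S) + (\<integral>w. (g n w)\<^sup>2 \<partial>S)"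
    by simp
  also have "(\<integral>w. (g n w)\<^sup>2 \<partial>S) \<le> (\<integral>w. B\<^sup>2 \<partial>S)"
    using g_bound \<open>integrable S (\<lambda>w. (g n w)\<^sup>2)\<close>
    by (intro integral_mono) (auto intro: power_mono[OF _ abs_ge_zero, of _ B 2, simplified])
  finally show ?case using Suc cross by (simp add: P.prob_space algebra_simps)
qed simp

lemma measure_abs_martingale_sum_ge_le:
  assumes c: "0 < c"
  shows "measure S {w \<in> space S. c \<le> \<bar>\<Sum>j<n. g j w\<bar>} \<le> n * B\<^sup>2 / c\<^sup>2"
proof -
  have "{w \<in> space S. c \<le> \<bar>\<Sum>j<n. g j w\<bar>} \<subseteq> {w \<in> space S. c\<^sup>2 \<le> (\<Sum>j<n. g j w)\<^sup>2}"
  proof safe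
    fix w assume "c \<le> \<bar>\<Sum>j<n. g j w\<bar>"
    then have "c\<^sup>2 \<le> \<bar>\<Sum>j<n. g j w\<bar>\<^sup>2" using c by (intro power_mono) auto
    then show "c\<^sup>2 \<le> (\<Sum>j<n. g j w)\<^sup>2" by simp
  qed
  then have "measure S {w \<in> space S. c \<le> \<bar>\<Sum>j<n. g j w\<bar>}
      \<le> measure S {w \<in> space S. c\<^sup>2 \<le> (\<Sum>j<n. g j w)\<^sup>2}"
    by (intro finite_measure_mono) measurable
  also have "\<dots> \<le> (\<integral>w. (\<Sum>j<n. g j w)\<^sup>2 \<partial>S) / c\<^sup>2"
    using c abs_martingale_sum_le
    by (intro integral_Markov_inequality_measure[OF integrable_square_bounded]) auto
  also have "\<dots> \<le> n * B\<^sup>2 / c\<^sup>2"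
    using integral_square_martingale_sum_le[of n] by (intro divide_right_mono) auto
  finally show ?thesis .
qed

text \<open>Chebyshev and Borel--Cantelli along the squares, then interpolation between consecutive
  squares.\<close>

lemma AE_martingale_average_tendsto_0: "AE w in S. (\<lambda>m. (\<Sum>j<m. g j w) / m) \<longlonglongrightarrow> 0"
proof -
  have "AE w in S. eventually (\<lambda>n. \<bar>(\<Sum>j<n\<^sup>2. g j w) / n\<^sup>2\<bar> < 1 / Suc e) sequentially" for e :: nat
  proof -
    define A where "A n = {w \<in> space S. n\<^sup>2 / Suc e \<le> \<bar>\<Sum>j<n\<^sup>2. g j w\<bar>}" for n :: nat
    have [measurable]: "A n \<in> sets S" for n unfolding A_def by measurable
    have "measure S (A n) \<le> (B\<^sup>2 * (Suc e)\<^sup>2) * inverse (real n ^ 2)" if "1 \<le> n" for n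
    proof -
      have "measure S (A n) \<le> n\<^sup>2 * B\<^sup>2 / (n\<^sup>2 / Suc e)\<^sup>2"
        unfolding A_def using that by (intro measure_abs_martingale_sum_ge_le) simp
      also have "\<dots> = (B\<^sup>2 * (Suc e)\<^sup>2) * inverse (real n ^ 2)"
        using that by (simp add: field_simps power2_eq_square)
      finally show ?thesis .
    qed
    then have "summable (\<lambda>n. measure S (A n))"
      by (intro summable_comparison_test'[OF summable_mult[OF inverse_power_summable]]) auto
    then have "AE w in S. eventually (\<lambda>n. w \<in> space S - A n) sequentially"
      by (intro borel_cantelli_AE1) (auto simp: emeasure_eq_measure)
    then show ?thesis
    proof (rule eventually_mono)
      fix w assume "eventually (\<lambda>n. w \<in> space S - A n) sequentially"
      then show "eventually (\<lambda>n. \<bar>(\<Sum>j<n\<^sup>2. g j w) / n\<^sup>2\<bar> < 1 / Suc e) sequentially"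
        using eventually_gt_at_top[of 0] by eventually_elim (auto simp: A_def field_simps abs_divide)
    qed
  qed
  then have "AE w in S. \<forall>e::nat. eventually (\<lambda>n. \<bar>(\<Sum>j<n\<^sup>2. g j w) / n\<^sup>2\<bar> < 1 / Suc e) sequentially"
    by (simp add: AE_all_countable)
  then show ?thesis
  proof (rule eventually_mono)
    fix w
    assume "\<forall>e::nat. eventually (\<lambda>n. \<bar>(\<Sum>j<n\<^sup>2. g j w) / n\<^sup>2\<bar> < 1 / Suc e) sequentially"
    then have "(\<lambda>n. (\<Sum>j<n\<^sup>2. g j w) / n\<^sup>2) \<longlonglongrightarrow> 0"
      by (intro LIMSEQ_0_of_eventually_abs_less_inverse_Suc) auto
    then show "(\<lambda>m. (\<Sum>j<m. g j w) / m) \<longlonglongrightarrow> 0"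
      by (intro LIMSEQ_div_of_bounded_increments_squares[where B = B]) (simp_all add: g_bound)
  qed
qed

end

corollary AE_iid_average_tendsto:
  assumes [measurable]: "f \<in> borel_measurable M" and f_bound: "\<And>x. \<bar>f x\<bar> \<le> B"
  shows "AE w in S. (\<lambda>m. (\<Sum>j<m. f (w j)) / m) \<longlonglongrightarrow> (\<integral>x. f x \<partial>M)"
proof -
  let ?E = "\<integral>x. f x \<partial>M"
  have "integrable M f"
    using f_bound by (intro M.integrable_const_bound[where B = B]) auto
  then have "AE w in S. (\<lambda>m. (\<Sum>j<m. f (w j) - ?E) / m) \<longlonglongrightarrow> 0"
    using f_bound by (intro AE_martingale_average_tendsto_0[where B = "B + \<bar>?E\<bar>"] AE_I2)
      (auto simp: M.prob_space intro: abs_triangle_ineq4[THEN order_trans])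
  then show ?thesis
  proof (rule eventually_mono)
    fix w :: "nat \<Rightarrow> 'a" assume "(\<lambda>m. (\<Sum>j<m. f (w j) - ?E) / m) \<longlonglongrightarrow> 0"
    then have "(\<lambda>m. (\<Sum>j<m. f (w j) - ?E) / m + ?E) \<longlonglongrightarrow> 0 + ?E"
      by (intro tendsto_add tendsto_const)
    moreover have "\<forall>\<^sub>F m in sequentially. (\<Sum>j<m. f (w j) - ?E) / m + ?E = (\<Sum>j<m. f (w j)) / m"
      using eventually_gt_at_top[of 0] by eventually_elim (simp add: sum_subtractf field_simps)
    ultimately show "(\<lambda>m. (\<Sum>j<m. f (w j)) / m) \<longlonglongrightarrow> ?E"
      by (simp add: tendsto_cong)
  qed
qed

end

lemma (in prob_space) AE_LIMSEQ_imp_LIMSEQ_in_probability: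
  fixes X :: "nat \<Rightarrow> 'a \<Rightarrow> real"
  assumes [measurable]: "\<And>n. X n \<in> borel_measurable M"
    and lim: "AE w in M. (\<lambda>n. X n w) \<longlonglongrightarrow> c" and e: "0 < e"
  shows "(\<lambda>n. prob {w \<in> space M. \<bar>X n w - c\<bar> > e}) \<longlonglongrightarrow> 0"
proof -
  define s :: "nat \<Rightarrow> 'a \<Rightarrow> real" where "s n = indicator {w \<in> space M. \<bar>X n w - c\<bar> > e}" for n
  have "(\<lambda>n. integral\<^sup>L M (s n)) \<longlonglongrightarrow> integral\<^sup>L M (\<lambda>_. 0 :: real)"
  proof (rule integral_dominated_convergence[where w = "\<lambda>_. 1"])
    show "AE w in M. (\<lambda>n. s n w) \<longlonglongrightarrow> 0"
      using lim
    proof (rule eventually_mono)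
      fix w assume "(\<lambda>n. X n w) \<longlonglongrightarrow> c"
      then have "eventually (\<lambda>n. dist (X n w) c < e) sequentially" using e by (rule tendstoD)
      then have "eventually (\<lambda>n. s n w = 0) sequentially"
        by (rule eventually_mono) (auto simp: s_def dist_real_def)
      then show "(\<lambda>n. s n w) \<longlonglongrightarrow> 0" by (rule tendsto_eventually)
    qed
  qed (auto simp: s_def indicator_def)
  moreover have "integral\<^sup>L M (s n) = prob {w \<in> space M. \<bar>X n w - c\<bar> > e}" for n
    unfolding s_def by (simp add: Int_absorb2)
  ultimately show ?thesis by simp
qed

lemma (in prob_space) AE_tendsto_at_top_imp_tendsto_in_probability:
  fixes X :: "real \<Rightarrow> 'a \<Rightarrow> real"
  assumes [measurable]: "\<And>t. X t \<in> borel_measurable M"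
    and lim: "AE w in M. ((\<lambda>t. X t w) \<longlongrightarrow> c) at_top" and e: "0 < e"
  shows "((\<lambda>t. prob {w \<in> space M. \<bar>X t w - c\<bar> > e}) \<longlongrightarrow> 0) at_top"
proof (rule tendsto_at_topI_sequentially)
  fix T :: "nat \<Rightarrow> real" assume T: "filterlim T at_top sequentially"
  have "AE w in M. (\<lambda>n. X (T n) w) \<longlonglongrightarrow> c"
    using lim by (rule eventually_mono) (rule filterlim_compose[OF _ T])
  then show "(\<lambda>n. prob {w \<in> space M. \<bar>X (T n) w - c\<bar> > e}) \<longlonglongrightarrow> 0"
    using e by (intro AE_LIMSEQ_imp_LIMSEQ_in_probability) auto
qed

section \<open>Growing a CMRT\<close>

definition vertices_of_type :: "cmrt \<Rightarrow> bool \<Rightarrow> nat list" where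
  "vertices_of_type T a = filter (\<lambda>i. fst (T ! i) = a) [0..<length T]"

definition uniform_index :: "real \<Rightarrow> nat \<Rightarrow> nat" where
  "uniform_index u n = nat \<lfloor>u * real n\<rfloor>"

definition pick_vertex :: "cmrt \<Rightarrow> bool \<Rightarrow> real \<Rightarrow> nat" where
  "pick_vertex T a u = vertices_of_type T a ! uniform_index u (length (vertices_of_type T a))"

definition valid_cmrt :: "cmrt \<Rightarrow> bool" where
  "valid_cmrt T \<longleftrightarrow> (\<forall>a. vertices_of_type T a \<noteq> []) \<and>
     (\<forall>j<length T. \<forall>v. snd (T ! j) = Some v \<longrightarrow> v < length T)"

text \<open>Type A vertices with \<open>k - 1\<close> children; written with \<open>+ 1\<close> so that the count is empty for
  \<open>k = 0\<close> rather than truncating \<open>0 - 1\<close> to \<open>0\<close>.\<close>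

definition NkA_prev :: "nat \<Rightarrow> cmrt \<Rightarrow> nat" where
  "NkA_prev k T = card {v. v < length T \<and> fst (T ! v) \<and> outdeg T v + 1 = k}"

lemma set_vertices_of_type: "set (vertices_of_type T a) = {i. i < length T \<and> fst (T ! i) = a}"
  unfolding vertices_of_type_def by auto

lemma uniform_index_less: "0 \<le> u \<Longrightarrow> u < 1 \<Longrightarrow> 0 < n \<Longrightarrow> uniform_index u n < n"
  unfolding uniform_index_def by (simp add: nat_less_iff floor_less_iff)

lemma cmrt_add_eq: "cmrt_add T (a, s, u, e) = T @ [(a, Some (pick_vertex T (s = a) u))]"
  unfolding cmrt_add_def pick_vertex_def vertices_of_type_def uniform_index_def
  by (cases s) (simp_all add: Let_def)

lemma length_cmrt_add: "length (cmrt_add T r) = Suc (length T)"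
  by (cases r) (simp add: cmrt_add_eq)

lemma length_cmrt_seq: "length (cmrt_seq w m) = m + 2"
  by (induction m) (simp_all add: cmrt_init_def length_cmrt_add)

lemma cmrt_seq_cong: "(\<And>i. i < m \<Longrightarrow> w i = w' i) \<Longrightarrow> cmrt_seq w m = cmrt_seq w' m"
  by (induction m) auto

lemma num_A_cmrt_add: "num_A (cmrt_add T r) = num_A T + (if fst r then 1 else 0)"
  by (cases r) (simp add: cmrt_add_eq num_A_def)

lemma num_A_cmrt_seq: "num_A (cmrt_seq w m) = 1 + card {j. j < m \<and> fst (w j)}"
proof (induction m)
  case (Suc m)
  have "{j. j < Suc m \<and> fst (w j)} = {j. j < m \<and> fst (w j)} \<union> (if fst (w m) then {m} else {})"
    by (auto simp: less_Suc_eq)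
  then show ?case using Suc by (simp add: num_A_cmrt_add)
qed (simp add: cmrt_init_def num_A_def)

lemma num_A_eq_length_vertices_of_type: "num_A T = length (vertices_of_type T True)"
proof -
  have "filter fst T = map ((!) T) (filter (\<lambda>i. fst (T ! i)) [0..<length T])"
    by (subst map_nth[symmetric]) (simp add: filter_map comp_def)
  then show ?thesis unfolding num_A_def vertices_of_type_def by simp
qed

lemma num_A_eq_card: "num_A T = card {v. v < length T \<and> fst (T ! v)}"
  unfolding num_A_def by (rule length_filter_conv_card)

lemma num_A_le_length: "num_A T \<le> length T"
  unfolding num_A_def by simp

lemma NkA_le_num_A: "NkA k T \<le> num_A T"
  unfolding NkA_def num_A_eq_card by (rule card_mono) auto

lemma NkA_prev_le_num_A: "NkA_prev k T \<le> num_A T"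
  unfolding NkA_prev_def num_A_eq_card by (rule card_mono) auto

lemma NkA_prev_0: "NkA_prev 0 T = 0"
  unfolding NkA_prev_def by simp

lemma NkA_prev_Suc: "NkA_prev (Suc k) T = NkA k T"
  unfolding NkA_prev_def NkA_def by simp

lemma sum_nth_vertices_of_type:
  "(\<Sum>i<length (vertices_of_type T a). f (vertices_of_type T a ! i))
     = (\<Sum>v | v < length T \<and> fst (T ! v) = a. f v)"
proof -
  have "distinct (vertices_of_type T a)" unfolding vertices_of_type_def by simp
  then have "(\<Sum>i<length (vertices_of_type T a). f (vertices_of_type T a ! i))
      = (\<Sum>v\<in>set (vertices_of_type T a). f v)"
    by (simp add: sum_list_sum_nth lessThan_atLeast0 flip: sum_list_distinct_conv_sum_set)
  then show ?thesis by (simp add: set_vertices_of_type)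
qed

lemma outdeg_snoc: "outdeg (T @ [(a, Some v)]) x = outdeg T x + (if x = v then 1 else 0)"
proof -
  have "{j. j < length (T @ [(a, Some v)]) \<and> snd ((T @ [(a, Some v)]) ! j) = Some x}
      = {j. j < length T \<and> snd (T ! j) = Some x} \<union> (if x = v then {length T} else {})"
    by (auto simp: nth_append less_Suc_eq)
  then show ?thesis unfolding outdeg_def by (auto simp: card_insert_if)
qed

lemma card_increment_at:
  fixes f :: "nat \<Rightarrow> nat"
  shows "real (card {x. x < n \<and> P x \<and> f x + (if x = v then 1 else 0) = k})
    = real (card {x. x < n \<and> P x \<and> f x = k}) + (if v < n \<and> P v \<and> f v + 1 = k then 1 else 0)
      - (if v < n \<and> P v \<and> f v = k then 1 else 0)"
proof -
  define C where "C = {x. x < n \<and> P x \<and> x \<noteq> v \<and> f x = k}"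
  have "{x. x < n \<and> P x \<and> f x + (if x = v then 1 else 0) = k}
      = (if v < n \<and> P v \<and> f v + 1 = k then insert v C else C)"
    "{x. x < n \<and> P x \<and> f x = k} = (if v < n \<and> P v \<and> f v = k then insert v C else C)"
    unfolding C_def by auto
  moreover have "finite C" "v \<notin> C" unfolding C_def by auto
  ultimately show ?thesis by simp
qed

lemma NkA_snoc:
  "real (NkA k (T @ [(a, Some v)])) = real (NkA k T)
     + (if v < length T \<and> fst (T ! v) \<and> outdeg T v + 1 = k then 1 else 0)
     - (if v < length T \<and> fst (T ! v) \<and> outdeg T v = k then 1 else 0)
     + (if a \<and> outdeg T (length T) + (if length T = v then 1 else 0) = k then 1 else 0)"
proof -
  let ?T = "T @ [(a, Some v)]"
  have "{x. x < length ?T \<and> fst (?T ! x) \<and> outdeg ?T x = k}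
     = {x. x < length T \<and> fst (T ! x) \<and> outdeg T x + (if x = v then 1 else 0) = k}
       \<union> (if a \<and> outdeg T (length T) + (if length T = v then 1 else 0) = k then {length T} else {})"
    by (auto simp: outdeg_snoc nth_append less_Suc_eq)
  then have "NkA k ?T = card {x. x < length T \<and> fst (T ! x) \<and> outdeg T x + (if x = v then 1 else 0) = k}
      + (if a \<and> outdeg T (length T) + (if length T = v then 1 else 0) = k then 1 else 0)"
    unfolding NkA_def by (auto simp: card_insert_if)
  then show ?thesis
    unfolding NkA_def[of k T] using card_increment_at[of "length T" "\<lambda>x. fst (T ! x)" "outdeg T" v k]
    by simp
qed

lemma abs_NkA_cmrt_add_diff_le: "\<bar>real (NkA k (cmrt_add T r)) - real (NkA k T)\<bar> \<le> 2"
proof -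
  obtain a s u e where "r = (a, s, u, e)" by (cases r) auto
  then obtain v where "cmrt_add T r = T @ [(a, Some v)]" by (simp add: cmrt_add_eq)
  then show ?thesis using NkA_snoc[of k T a v] by auto
qed

lemma valid_cmrt_init: "valid_cmrt cmrt_init"
  unfolding valid_cmrt_def cmrt_init_def vertices_of_type_def
  by (auto simp: less_Suc_eq nth_Cons split: nat.splits)

lemma pick_vertex_mem:
  assumes "valid_cmrt T" and "0 \<le> u" "u < 1"
  shows "pick_vertex T a u \<in> set (vertices_of_type T a)"
proof -
  have "uniform_index u (length (vertices_of_type T a)) < length (vertices_of_type T a)"
    using assms by (intro uniform_index_less) (auto simp: valid_cmrt_def)
  then show ?thesis unfolding pick_vertex_def by (rule nth_mem)
qed

lemma valid_cmrt_add:
  assumes "valid_cmrt T" and "0 \<le> u" "u < 1"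
  shows "valid_cmrt (cmrt_add T (a, s, u, e))"
  unfolding valid_cmrt_def
proof (intro conjI allI impI)
  let ?T = "cmrt_add T (a, s, u, e)"
  fix b
  have "set (vertices_of_type T b) \<subseteq> set (vertices_of_type ?T b)"
    by (auto simp: set_vertices_of_type cmrt_add_eq nth_append)
  moreover have "vertices_of_type T b \<noteq> []" using assms(1) by (simp add: valid_cmrt_def)
  ultimately show "vertices_of_type ?T b \<noteq> []" by auto
next
  fix j v assume "j < length (cmrt_add T (a, s, u, e))" "snd (cmrt_add T (a, s, u, e) ! j) = Some v"
  then show "v < length (cmrt_add T (a, s, u, e))"
    using assms(1) pick_vertex_mem[OF assms, of "s = a"]
    by (auto simp: valid_cmrt_def cmrt_add_eq nth_append less_Suc_eq set_vertices_of_type split: if_splits)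
qed

lemma valid_outdeg_length: "valid_cmrt T \<Longrightarrow> outdeg T (length T) = 0"
  unfolding valid_cmrt_def outdeg_def by fastforce

lemma NkA_cmrt_add_valid:
  assumes "valid_cmrt T" and "0 \<le> u" "u < 1"
  defines "v \<equiv> pick_vertex T True u"
  shows "real (NkA k (cmrt_add T (a, s, u, e))) = real (NkA k T)
    + (if s = a then (if outdeg T v + 1 = k then 1 else 0) - (if outdeg T v = k then 1 else 0) else 0)
    + (if a \<and> k = 0 then 1 else 0)"
proof -
  let ?v = "pick_vertex T (s = a) u"
  have "?v < length T" "fst (T ! ?v) = (s = a)"
    using pick_vertex_mem[OF assms(1-3), of "s = a"] by (auto simp: set_vertices_of_type)
  then show ?thesis
    unfolding cmrt_add_eq NkA_snoc v_def using valid_outdeg_length[OF assms(1)] by auto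
qed

abbreviation U01 :: "real measure" where
  "U01 \<equiv> uniform_measure lborel {0..<1}"

abbreviation Exp1 :: "real measure" where
  "Exp1 \<equiv> density lborel (exponential_density 1)"

lemma prob_space_U01: "prob_space U01"
  by (rule prob_space_uniform_measure) auto

lemma prob_space_Exp1: "prob_space Exp1"
  by (rule prob_space_exponential_density) simp

lemma prob_space_U01_Exp1: "prob_space (U01 \<Otimes>\<^sub>M Exp1)"
proof -
  interpret U: prob_space U01 by (rule prob_space_U01)
  interpret E: prob_space Exp1 by (rule prob_space_Exp1)
  interpret UE: pair_prob_space U01 Exp1 ..
  show ?thesis by (rule UE.prob_space_axioms)
qed

lemma prob_space_pmf_pair:
  assumes "prob_space R"
  shows "prob_space (measure_pmf P \<Otimes>\<^sub>M R)"
proof -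
  interpret R: prob_space R by fact
  interpret PR: pair_prob_space "measure_pmf P" R ..
  show ?thesis by (rule PR.prob_space_axioms)
qed

lemma prob_space_step_measure: "prob_space (step_measure p q)"
  unfolding step_measure_def by (intro prob_space_pmf_pair prob_space_U01_Exp1)

lemma sequence_space_step_measure: "sequence_space (step_measure p q)"
  unfolding sequence_space_def product_prob_space_def product_prob_space_axioms_def
    product_sigma_finite_def
  using prob_space_step_measure[of p q] by (auto intro: prob_space_imp_sigma_finite)

lemma prob_space_cmrt_space: "prob_space (cmrt_space p q)"
proof -
  interpret S: sequence_space "step_measure p q" by (rule sequence_space_step_measure)
  show ?thesis unfolding cmrt_space_def by (rule S.P.prob_space_axioms)
qed

lemma measurable_pmf_pair:
  fixes P :: "'a::countable pmf"
  assumes "\<And>x. (\<lambda>y. f (x, y)) \<in> measurable N K"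
  shows "f \<in> measurable (measure_pmf P \<Otimes>\<^sub>M N) K"
proof -
  have "f \<in> measurable (count_space UNIV \<Otimes>\<^sub>M N) K"
    using assms by (intro measurable_pair_measure_countable1) auto
  then show ?thesis
    by (subst measurable_cong_sets[OF sets_pair_measure_cong[OF sets_measure_pmf_count_space refl] refl])
qed

lemma measurable_step_measure:
  assumes "\<And>a s. (\<lambda>y. f (a, s, y)) \<in> measurable (U01 \<Otimes>\<^sub>M Exp1) K"
  shows "f \<in> measurable (step_measure p q) K"
  unfolding step_measure_def using assms by (intro measurable_pmf_pair) auto

lemma integral_pmf_pair:
  fixes G :: "'a \<times> 'b \<Rightarrow> real"
  assumes "prob_space R" and [measurable]: "G \<in> borel_measurable (measure_pmf P \<Otimes>\<^sub>M R)"
    and "\<And>x. \<bar>G x\<bar> \<le> B"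
  shows "(\<integral>x. G x \<partial>(measure_pmf P \<Otimes>\<^sub>M R)) = (\<integral>a. (\<integral>y. G (a, y) \<partial>R) \<partial>P)"
proof -
  interpret R: prob_space R by fact
  interpret PR: pair_prob_space "measure_pmf P" R ..
  have "integrable (measure_pmf P \<Otimes>\<^sub>M R) G"
    using assms(3) by (intro PR.integrable_const_bound[where B = B]) auto
  then show ?thesis by (rule PR.integral_fst'[symmetric])
qed

lemma integral_pair_fst:
  assumes "prob_space R" and [measurable]: "f \<in> borel_measurable N"
  shows "(\<integral>x. f (fst x) \<partial>(N \<Otimes>\<^sub>M R)) = (\<integral>x. (f x :: real) \<partial>N)"
proof -
  interpret R: prob_space R by fact
  have "(\<integral>x. f x \<partial>N) = (\<integral>x. f x \<partial>distr (N \<Otimes>\<^sub>M R) N fst)" by (simp add: R.distr_pair_fst)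
  then show ?thesis by (subst (asm) integral_distr) auto
qed

lemma integral_pair_snd:
  fixes f :: "'b \<Rightarrow> real"
  assumes "prob_space N" "prob_space R" and [measurable]: "f \<in> borel_measurable R"
    and "\<And>y. \<bar>f y\<bar> \<le> B"
  shows "(\<integral>x. f (snd x) \<partial>(N \<Otimes>\<^sub>M R)) = (\<integral>y. (f y :: real) \<partial>R)"
proof -
  interpret N: prob_space N by fact
  interpret R: prob_space R by fact
  interpret NR: pair_prob_space N R ..
  have "integrable (N \<Otimes>\<^sub>M R) (\<lambda>x. f (snd x))"
    using assms(4) by (intro NR.integrable_const_bound[where B = B]) auto
  then show ?thesis by (simp add: NR.integral_fst'[symmetric] N.prob_space)
qed

lemma integral_step_measure_choices:
  fixes F :: "bool \<Rightarrow> bool \<Rightarrow> real \<Rightarrow> real"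
  assumes [measurable]: "\<And>a s. F a s \<in> borel_measurable borel" and F_bound: "\<And>a s u. \<bar>F a s u\<bar> \<le> B"
    and p: "0 \<le> p" "p \<le> 1" and q: "0 \<le> q" "q \<le> 1"
  shows "(\<integral>x. F (fst x) (fst (snd x)) (fst (snd (snd x))) \<partial>step_measure p q)
    = p * q * (\<integral>u. F True True u \<partial>U01) + p * (1 - q) * (\<integral>u. F True False u \<partial>U01)
      + (1 - p) * q * (\<integral>u. F False True u \<partial>U01) + (1 - p) * (1 - q) * (\<integral>u. F False False u \<partial>U01)"
proof -
  have inner: "(\<integral>y. F a (fst y) (fst (snd y)) \<partial>(measure_pmf (bernoulli_pmf q) \<Otimes>\<^sub>M (U01 \<Otimes>\<^sub>M Exp1)))
      = q * (\<integral>u. F a True u \<partial>U01) + (1 - q) * (\<integral>u. F a False u \<partial>U01)" for a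
    using F_bound q
    by (subst integral_pmf_pair[OF prob_space_U01_Exp1 measurable_pmf_pair])
      (simp_all add: integral_pair_fst[OF prob_space_Exp1] mult.commute)
  show ?thesis
    unfolding step_measure_def using F_bound p
    by (subst integral_pmf_pair[OF prob_space_pmf_pair[OF prob_space_U01_Exp1] measurable_pmf_pair])
      (simp_all add: inner algebra_simps)
qed

lemma integral_step_measure_type_A:
  assumes "0 \<le> p" "p \<le> 1"
  shows "(\<integral>x. (if fst x then 1 else 0 :: real) \<partial>step_measure p q) = p"
  unfolding step_measure_def using assms
  by (subst integral_pair_fst[OF prob_space_pmf_pair[OF prob_space_U01_Exp1]]) simp_all

lemma integral_step_measure_exp_tail:
  "(\<integral>x. (if 1 < snd (snd (snd x)) then 1 else 0 :: real) \<partial>step_measure p q) = exp (-1)"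
proof -
  interpret E: prob_space Exp1 by (rule prob_space_Exp1)
  let ?f = "\<lambda>e::real. if 1 < e then 1 else 0 :: real"
  have "(\<integral>x. ?f (snd (snd (snd x))) \<partial>step_measure p q)
      = (\<integral>y. ?f (snd (snd y)) \<partial>(measure_pmf (bernoulli_pmf q) \<Otimes>\<^sub>M (U01 \<Otimes>\<^sub>M Exp1)))"
    unfolding step_measure_def
    by (rule integral_pair_snd[where B = 1, OF prob_space_measure_pmf
          prob_space_pmf_pair[OF prob_space_U01_Exp1]]) auto
  also have "\<dots> = (\<integral>y. ?f (snd y) \<partial>(U01 \<Otimes>\<^sub>M Exp1))"
    by (rule integral_pair_snd[where B = 1, OF prob_space_measure_pmf prob_space_U01_Exp1]) auto
  also have "\<dots> = (\<integral>e. ?f e \<partial>Exp1)"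
    by (rule integral_pair_snd[where B = 1, OF prob_space_U01 prob_space_Exp1]) auto
  also have "\<dots> = measure Exp1 {1<..}"
  proof -
    have "?f = indicator {1<..}" by (auto simp: indicator_def fun_eq_iff)
    then show ?thesis by simp
  qed
  also have "\<dots> = 1 - measure Exp1 {..1}"
    using E.prob_compl[of "{..1}"] by (simp add: Compl_eq_Diff_UNIV[symmetric] Compl_atMost)
  also have "measure Exp1 {..1} = 1 - exp (-1)"
    using emeasure_erlang_density[of 1 0 1] by (simp add: erlang_CDF_0 measure_def)
  finally show ?thesis by simp
qed

lemma integral_uniform_index:
  fixes G :: "nat \<Rightarrow> real"
  assumes n: "0 < n"
  shows "(\<integral>u. G (uniform_index u n) \<partial>U01) = (\<Sum>i<n. G i) / n"
proof -
  interpret U: prob_space U01 by (rule prob_space_U01)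
  let ?I = "\<lambda>i. {real i / n ..< real (Suc i) / n}"
  have in_I: "u \<in> ?I i \<longleftrightarrow> i = uniform_index u n" if u: "u \<in> {0..<1}" for u i
  proof -
    have "u \<in> ?I i \<longleftrightarrow> real i \<le> u * n \<and> u * n < real i + 1"
      using n by (auto simp: field_simps)
    also have "\<dots> \<longleftrightarrow> \<lfloor>u * n\<rfloor> = int i" by (simp add: floor_eq_iff)
    also have "\<dots> \<longleftrightarrow> i = uniform_index u n"
      unfolding uniform_index_def using u by auto
    finally show ?thesis .
  qed
  have "G (uniform_index u n) = (\<Sum>i<n. G i * indicator (?I i) u)" if u: "u \<in> {0..<1}" for u
  proof -
    have "(\<Sum>i<n. G i * indicator (?I i) u) = (\<Sum>i<n. if i = uniform_index u n then G i else 0)"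
      by (intro sum.cong refl) (simp only: indicator_def in_I[OF u], simp)
    also have "\<dots> = G (uniform_index u n)" using uniform_index_less[of u n] u n by simp
    finally show ?thesis ..
  qed
  then have ae: "AE u in U01. G (uniform_index u n) = (\<Sum>i<n. G i * indicator (?I i) u)"
    by (intro AE_uniform_measureI AE_I2) auto
  have "(\<integral>u. G (uniform_index u n) \<partial>U01) = (\<integral>u. (\<Sum>i<n. G i * indicator (?I i) u) \<partial>U01)"
  proof (rule integral_cong_AE[OF _ _ ae])
    show "(\<lambda>u. G (uniform_index u n)) \<in> borel_measurable U01"
      unfolding uniform_index_def by measurable
  qed measurable
  also have "\<dots> = (\<Sum>i<n. G i * measure U01 (?I i))"
    by (subst Bochner_Integration.integral_sum)
      (auto intro!: integrable_mult_right simp: U.emeasure_eq_measure)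
  also have "\<dots> = (\<Sum>i<n. G i * (1 / n))"
  proof (intro sum.cong refl)
    fix i assume "i \<in> {..<n}"
    then have "{0..<1} \<inter> ?I i = ?I i" using n by (auto simp: field_simps)
    then have "measure U01 (?I i) = measure lborel (?I i)"
      by (subst measure_uniform_measure) auto
    then show "G i * measure U01 (?I i) = G i * (1 / n)" using n by (simp add: field_simps)
  qed
  finally show ?thesis by (simp add: sum_divide_distrib)
qed

lemma integral_pick_vertex_A:
  fixes f :: "nat \<Rightarrow> real"
  assumes "valid_cmrt T"
  shows "(\<integral>u. f (pick_vertex T True u) \<partial>U01) = (\<Sum>v | v < length T \<and> fst (T ! v). f v) / num_A T"
proof -
  have "0 < length (vertices_of_type T True)" using assms unfolding valid_cmrt_def by auto
  from integral_uniform_index[OF this, of "\<lambda>i. f (vertices_of_type T True ! i)"]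
  show ?thesis
    unfolding pick_vertex_def sum_nth_vertices_of_type num_A_eq_length_vertices_of_type by simp
qed

lemma AE_pair_snd:
  assumes "prob_space N" "prob_space R" and "{y \<in> space R. P y} \<in> sets R"
    and "AE y in R. P y"
  shows "AE x in N \<Otimes>\<^sub>M R. P (snd x)"
proof -
  interpret N: prob_space N by fact
  interpret R: prob_space R by fact
  interpret NR: pair_prob_space N R ..
  have "{x \<in> space (N \<Otimes>\<^sub>M R). P (snd x)} = snd -` {y \<in> space R. P y} \<inter> space (N \<Otimes>\<^sub>M R)"
    by (auto simp: space_pair_measure)
  then have "{x \<in> space (N \<Otimes>\<^sub>M R). P (snd x)} \<in> sets (N \<Otimes>\<^sub>M R)"
    using measurable_sets[OF measurable_snd assms(3)] by simp
  then show ?thesis using assms(4) by (intro NR.AE_pair_measure) auto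
qed

lemma AE_step_measure:
  "AE x in step_measure p q. 0 \<le> fst (snd (snd x)) \<and> fst (snd (snd x)) < 1 \<and> 0 \<le> snd (snd (snd x))"
proof -
  interpret U: prob_space U01 by (rule prob_space_U01)
  interpret E: prob_space Exp1 by (rule prob_space_Exp1)
  interpret UE: pair_prob_space U01 Exp1 ..
  have U: "AE u in U01. 0 \<le> u \<and> u < 1" by (rule AE_uniform_measureI) auto
  have E: "AE e in Exp1. 0 \<le> e" by (subst AE_density) (auto simp: exponential_density_def)
  have "AE y in U01 \<Otimes>\<^sub>M Exp1. 0 \<le> fst y \<and> fst y < 1 \<and> 0 \<le> snd y"
  proof (rule UE.AE_pair_measure)
    show "{y \<in> space (U01 \<Otimes>\<^sub>M Exp1). 0 \<le> fst y \<and> fst y < 1 \<and> 0 \<le> snd y} \<in> sets (U01 \<Otimes>\<^sub>M Exp1)"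
      by measurable
  qed (use U E in \<open>auto elim!: eventually_mono\<close>)
  then have "AE y in measure_pmf (bernoulli_pmf q) \<Otimes>\<^sub>M (U01 \<Otimes>\<^sub>M Exp1).
      0 \<le> fst (snd y) \<and> fst (snd y) < 1 \<and> 0 \<le> snd (snd y)"
    by (rule AE_pair_snd[OF prob_space_measure_pmf prob_space_U01_Exp1, rotated]) measurable
  then show ?thesis
    unfolding step_measure_def
    by (rule AE_pair_snd[OF prob_space_measure_pmf prob_space_pmf_pair[OF prob_space_U01_Exp1], rotated])
      measurable
qed

lemma measurable_cmrt_add: "(\<lambda>x. cmrt_add T x) \<in> measurable (step_measure p q) (count_space UNIV)"
proof (rule measurable_step_measure)
  fix a s :: bool
  let ?vs = "vertices_of_type T (s = a)"
  have "(\<lambda>y. uniform_index (fst y) (length ?vs)) \<in> measurable (U01 \<Otimes>\<^sub>M Exp1) (count_space UNIV)"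
    unfolding uniform_index_def by measurable
  then have "(\<lambda>y. T @ [(a, Some (?vs ! uniform_index (fst y) (length ?vs)))])
      \<in> measurable (U01 \<Otimes>\<^sub>M Exp1) (count_space UNIV)"
    by (rule measurable_compose) simp
  moreover have "(\<lambda>y. cmrt_add T (a, s, y)) = (\<lambda>y. T @ [(a, Some (?vs ! uniform_index (fst y) (length ?vs)))])"
    by (auto simp: fun_eq_iff cmrt_add_eq pick_vertex_def)
  ultimately show "(\<lambda>y. cmrt_add T (a, s, y)) \<in> measurable (U01 \<Otimes>\<^sub>M Exp1) (count_space UNIV)"
    by simp
qed

lemma measurable_coordinate: "(\<lambda>w. w j) \<in> measurable (cmrt_space p q) (step_measure p q)"
  unfolding cmrt_space_def by (rule measurable_component_singleton) simp

lemma measurable_cmrt_seq[measurable]: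
  "(\<lambda>w. cmrt_seq w m) \<in> measurable (cmrt_space p q) (count_space UNIV)"
proof (induction m)
  case (Suc m)
  have "(\<lambda>w. cmrt_add (cmrt_seq w m) (w m)) \<in> measurable (cmrt_space p q) (count_space UNIV)"
  proof (rule measurable_compose_countable[where f = "\<lambda>T w. cmrt_add T (w m)", OF _ Suc])
    show "(\<lambda>w. cmrt_add T (w m)) \<in> measurable (cmrt_space p q) (count_space UNIV)" for T
      using measurable_compose[OF measurable_coordinate measurable_cmrt_add] by simp
  qed
  then show ?case by simp
qed simp

lemma measurable_hold[measurable]: "(\<lambda>w. hold p w j) \<in> borel_measurable (cmrt_space p q)"
proof -
  have "(\<lambda>x. snd (snd (snd x))) \<in> borel_measurable (step_measure p q)"
    unfolding step_measure_def by measurable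
  from measurable_compose[OF measurable_coordinate this]
  have "(\<lambda>w. snd (snd (snd (w j)))) \<in> borel_measurable (cmrt_space p q)" .
  moreover have "(\<lambda>w. real (num_A (cmrt_seq w j))) \<in> borel_measurable (cmrt_space p q)"
    using measurable_compose[OF measurable_cmrt_seq borel_measurable_count_space] by simp
  ultimately show ?thesis unfolding hold_def by measurable
qed

lemma measurable_jump_time[measurable]: "(\<lambda>w. jump_time p w m) \<in> borel_measurable (cmrt_space p q)"
  unfolding jump_time_def by measurable

lemma measurable_bp_state:
  "(\<lambda>w. bp_state p w t) \<in> measurable (cmrt_space p q) (count_space UNIV)"
proof -
  have "(\<lambda>w. LEAST m. t < jump_time p w (Suc m)) \<in> measurable (cmrt_space p q) (count_space UNIV)"
    by (rule measurable_Least) measurable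
  then show ?thesis
    unfolding bp_state_def by (rule measurable_compose_countable[where f = "\<lambda>m w. cmrt_seq w m", rotated])
      measurable
qed

lemma measurable_cmrt_tree: "(\<lambda>w. cmrt_tree w n) \<in> measurable (cmrt_space p q) (count_space UNIV)"
  unfolding cmrt_tree_def by measurable

lemma measurable_NkA_fraction_bp_state:
  "(\<lambda>w. real (NkA k (bp_state p w t)) / real (length (bp_state p w t))) \<in> borel_measurable (cmrt_space p q)"
  using measurable_compose[OF measurable_bp_state
      borel_measurable_count_space[of "\<lambda>T. real (NkA k T) / real (length T)" UNIV]] by simp

lemma measurable_NkA_fraction_cmrt_tree:
  "(\<lambda>w. real (NkA k (cmrt_tree w n)) / real n) \<in> borel_measurable (cmrt_space p q)"
  using measurable_compose[OF measurable_cmrt_tree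
      borel_measurable_count_space[of "\<lambda>T. real (NkA k T) / real n" UNIV]] by simp

section \<open>Drift of the degree counts\<close>

definition attach_A_prob :: "real \<Rightarrow> real \<Rightarrow> real" where
  "attach_A_prob p q = p * q + (1 - p) * (1 - q)"

definition NkA_drift :: "real \<Rightarrow> real \<Rightarrow> nat \<Rightarrow> cmrt \<Rightarrow> real" where
  "NkA_drift p q k T =
     attach_A_prob p q * (real (NkA_prev k T) - real (NkA k T)) / real (num_A T) + (if k = 0 then p else 0)"

lemma attach_A_prob_bounds:
  assumes "0 \<le> p" "p \<le> 1" "0 \<le> q" "q \<le> 1"
  shows "0 \<le> attach_A_prob p q" "attach_A_prob p q \<le> 1"
proof -
  have "p * q + (1 - p) * (1 - q) \<le> p * 1 + (1 - p) * 1"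
    using assms by (intro add_mono mult_left_mono) auto
  then show "attach_A_prob p q \<le> 1" unfolding attach_A_prob_def by simp
qed (use assms in \<open>simp add: attach_A_prob_def\<close>)

lemma abs_NkA_drift_le:
  assumes "0 \<le> p" "p \<le> 1" "0 \<le> q" "q \<le> 1"
  shows "\<bar>NkA_drift p q k T\<bar> \<le> 2"
proof -
  have "\<bar>(real (NkA_prev k T) - real (NkA k T)) / real (num_A T)\<bar> \<le> 1"
    using NkA_prev_le_num_A[of k T] NkA_le_num_A[of k T]
    by (cases "num_A T = 0") (auto simp: abs_divide)
  then have "attach_A_prob p q * \<bar>(real (NkA_prev k T) - real (NkA k T)) / real (num_A T)\<bar> \<le> 1"
    using attach_A_prob_bounds[OF assms] by (intro mult_le_one) auto
  then have "\<bar>attach_A_prob p q * ((real (NkA_prev k T) - real (NkA k T)) / real (num_A T))\<bar> \<le> 1"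
    using attach_A_prob_bounds[OF assms] by (simp add: abs_mult)
  moreover have "\<bar>if k = 0 then p else 0\<bar> \<le> 1" using assms by simp
  ultimately show ?thesis
    unfolding NkA_drift_def times_divide_eq_right[symmetric]
    using abs_triangle_ineq[of "attach_A_prob p q * ((real (NkA_prev k T) - real (NkA k T)) / real (num_A T))"
        "if k = 0 then p else 0"] by linarith
qed

lemma integral_outdeg_change_pick_vertex_A:
  assumes T: "valid_cmrt T"
  shows "(\<integral>u. (if outdeg T (pick_vertex T True u) + 1 = k then 1 else 0)
      - (if outdeg T (pick_vertex T True u) = k then 1 else 0) \<partial>U01)
    = (real (NkA_prev k T) - real (NkA k T)) / real (num_A T)"
proof -
  have count: "(\<Sum>v | v < length T \<and> fst (T ! v). if P v then 1 else 0 :: real)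
      = card {v. v < length T \<and> fst (T ! v) \<and> P v}" for P
    by (simp add: sum.inter_filter[symmetric] conj_assoc)
  have "(\<integral>u. (if outdeg T (pick_vertex T True u) + 1 = k then 1 else 0)
      - (if outdeg T (pick_vertex T True u) = k then 1 else 0) \<partial>U01)
    = (\<Sum>v | v < length T \<and> fst (T ! v).
        (if outdeg T v + 1 = k then 1 else 0) - (if outdeg T v = k then 1 else 0)) / num_A T"
    by (rule integral_pick_vertex_A[OF T])
  also have "\<dots> = (real (NkA_prev k T) - real (NkA k T)) / real (num_A T)"
    unfolding sum_subtractf count NkA_prev_def NkA_def ..
  finally show ?thesis .
qed

lemma integral_NkA_cmrt_add:
  assumes T: "valid_cmrt T" and p: "0 \<le> p" "p \<le> 1" and q: "0 \<le> q" "q \<le> 1"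
  shows "(\<integral>x. real (NkA k (cmrt_add T x)) \<partial>step_measure p q) = real (NkA k T) + NkA_drift p q k T"
proof -
  interpret U: prob_space U01 by (rule prob_space_U01)
  define D where "D u = (if outdeg T (pick_vertex T True u) + 1 = k then 1 else 0)
      - (if outdeg T (pick_vertex T True u) = k then 1 else 0 :: real)" for u
  define F where "F a s u = real (NkA k T) + (if s = a then D u else 0) + (if a \<and> k = 0 then 1 else 0)"
    for a s u
  have [measurable]: "D \<in> borel_measurable borel"
    unfolding D_def pick_vertex_def uniform_index_def by measurable
  have D_bound: "\<bar>D u\<bar> \<le> 1" for u unfolding D_def by auto
  have F_bound: "\<bar>F a s u\<bar> \<le> real (NkA k T) + 2" for a s u
    using D_bound[of u] unfolding F_def by (auto simp: abs_if split: if_splits)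
  have ae: "AE x in step_measure p q. real (NkA k (cmrt_add T x)) = F (fst x) (fst (snd x)) (fst (snd (snd x)))"
    using AE_step_measure
  proof (rule eventually_mono)
    fix x :: step_rand
    obtain a s u e where x: "x = (a, s, u, e)" by (cases x) auto
    assume "0 \<le> fst (snd (snd x)) \<and> fst (snd (snd x)) < 1 \<and> 0 \<le> snd (snd (snd x))"
    then have "0 \<le> u" "u < 1" unfolding x by auto
    from NkA_cmrt_add_valid[OF T this, of k a s e]
    show "real (NkA k (cmrt_add T x)) = F (fst x) (fst (snd x)) (fst (snd (snd x)))"
      unfolding x F_def D_def by simp
  qed
  have "(\<integral>x. real (NkA k (cmrt_add T x)) \<partial>step_measure p q)
      = (\<integral>x. F (fst x) (fst (snd x)) (fst (snd (snd x))) \<partial>step_measure p q)"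
  proof (rule integral_cong_AE[OF _ _ ae])
    show "(\<lambda>x. real (NkA k (cmrt_add T x))) \<in> borel_measurable (step_measure p q)"
      using measurable_cmrt_add by measurable
    show "(\<lambda>x. F (fst x) (fst (snd x)) (fst (snd (snd x)))) \<in> borel_measurable (step_measure p q)"
      by (rule measurable_step_measure) (simp add: F_def)
  qed
  also have "\<dots> = p * q * (\<integral>u. F True True u \<partial>U01) + p * (1 - q) * (\<integral>u. F True False u \<partial>U01)
      + (1 - p) * q * (\<integral>u. F False True u \<partial>U01) + (1 - p) * (1 - q) * (\<integral>u. F False False u \<partial>U01)"
    by (rule integral_step_measure_choices[OF _ F_bound p q]) (simp add: F_def)
  also have "\<dots> = real (NkA k T) + NkA_drift p q k T"
  proof -
    have int_D: "(\<integral>u. D u \<partial>U01) = (real (NkA_prev k T) - real (NkA k T)) / real (num_A T)"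
      unfolding D_def by (rule integral_outdeg_change_pick_vertex_A[OF T])
    have "integrable U01 D"
      using D_bound by (intro U.integrable_const_bound[where B = 1]) auto
    then have "(\<integral>u. F a s u \<partial>U01) = real (NkA k T) + (if s = a then (\<integral>u. D u \<partial>U01) else 0)
       + (if a \<and> k = 0 then 1 else 0)" for a s
      unfolding F_def by (cases "s = a") (simp_all add: U.prob_space)
    moreover have "real (num_A T) \<noteq> 0"
      using T unfolding num_A_eq_length_vertices_of_type valid_cmrt_def by simp
    ultimately show ?thesis unfolding int_D NkA_drift_def attach_A_prob_def by (simp add: field_simps)
  qed
  finally show ?thesis .
qed

definition NkA_mart_diff :: "real \<Rightarrow> real \<Rightarrow> nat \<Rightarrow> nat \<Rightarrow> (nat \<Rightarrow> step_rand) \<Rightarrow> real" where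
  "NkA_mart_diff p q k j w =
     real (NkA k (cmrt_seq w (Suc j))) - real (NkA k (cmrt_seq w j)) - NkA_drift p q k (cmrt_seq w j)"

lemma NkA_mart_diff_cong: "(\<forall>l\<le>j. w l = w' l) \<Longrightarrow> NkA_mart_diff p q k j w = NkA_mart_diff p q k j w'"
  unfolding NkA_mart_diff_def using cmrt_seq_cong[of "Suc j" w w'] cmrt_seq_cong[of j w w'] by auto

lemma abs_NkA_mart_diff_le:
  assumes "0 \<le> p" "p \<le> 1" "0 \<le> q" "q \<le> 1"
  shows "\<bar>NkA_mart_diff p q k j w\<bar> \<le> 4"
  using abs_NkA_cmrt_add_diff_le[of k "cmrt_seq w j" "w j"] abs_NkA_drift_le[OF assms, of k "cmrt_seq w j"]
  unfolding NkA_mart_diff_def by simp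

lemma measurable_NkA_mart_diff[measurable]:
  "NkA_mart_diff p q k j \<in> borel_measurable (cmrt_space p q)"
proof -
  have "(\<lambda>(T1, T2). real (NkA k T1) - real (NkA k T2) - NkA_drift p q k T2)
      \<in> borel_measurable (count_space UNIV \<Otimes>\<^sub>M count_space UNIV)"
    unfolding pair_measure_countable by simp
  from measurable_compose[OF measurable_Pair[OF measurable_cmrt_seq measurable_cmrt_seq] this]
  show ?thesis unfolding NkA_mart_diff_def[abs_def] by (simp del: cmrt_seq.simps)
qed

definition degree_limit :: "real \<Rightarrow> real \<Rightarrow> nat \<Rightarrow> real" where
  "degree_limit p r k = p / (1 + r) * (r / (1 + r)) ^ k"

lemma degree_limit_0: "degree_limit p r 0 = p / (1 + r)"
  by (simp add: degree_limit_def)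

lemma degree_limit_Suc: "degree_limit p r (Suc k) = r * degree_limit p r k / (1 + r)"
  by (simp add: degree_limit_def mult_ac)

lemma integral_erlang_density:
  assumes "0 < l"
  shows "(\<integral>x. erlang_density k l x \<partial>lborel) = 1"
proof -
  have "has_bochner_integral lborel (erlang_density k l) 1"
    using nn_integral_erlang_ith_moment[OF assms, of k 0] assms
    by (intro has_bochner_integral_nn_integral) auto
  then show ?thesis by (rule has_bochner_integral_integral_eq)
qed

text \<open>The integrand is a multiple of the Erlang density with shape \<open>k\<close> and rate \<open>1 + r\<close>.\<close>

lemma integral_poisson_prob_exp:
  assumes r: "0 \<le> r"
  shows "(LINT s:{0..}|lborel. poisson_prob (r * s) k * exp (- s)) = r ^ k / (1 + r) ^ Suc k"
proof -
  define l where "l = 1 + r"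
  have l: "0 < l" unfolding l_def using r by simp
  have "indicator {0..} s *\<^sub>R (poisson_prob (r * s) k * exp (- s))
      = r ^ k / l ^ Suc k * erlang_density k l s" for s :: real
  proof (cases "0 \<le> s")
    case True
    have "exp (- (r * s)) * exp (- s) = exp (- l * s)" unfolding l_def
      by (simp add: exp_add[symmetric] algebra_simps)
    with True l show ?thesis
      unfolding poisson_prob_def erlang_density_def by (simp add: power_mult_distrib field_simps)
  qed (simp add: erlang_density_def)
  then show ?thesis
    unfolding set_lebesgue_integral_def using integral_erlang_density[OF l, of k] by (simp add: l_def)
qed

lemma NkA_div_LIMSEQ:
  assumes p: "0 < p" "p \<le> 1" and q: "0 \<le> q" "q \<le> 1"
    and lim_A: "(\<lambda>m. real (num_A (cmrt_seq w m)) / m) \<longlonglongrightarrow> p"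
    and lim_mart: "\<forall>k. (\<lambda>m. (\<Sum>j<m. NkA_mart_diff p q k j w) / m) \<longlonglongrightarrow> 0"
  shows "(\<lambda>m. real (NkA k (cmrt_seq w m)) / m) \<longlonglongrightarrow> degree_limit p (attach_A_prob p q / p) k"
proof -
  let ?\<rho> = "attach_A_prob p q" and ?r = "attach_A_prob p q / p"
  have \<rho>: "0 \<le> ?\<rho>" "?\<rho> \<le> 1" using attach_A_prob_bounds p q by auto
  have step: "(\<lambda>m. real (NkA k (cmrt_seq w m)) / m) \<longlonglongrightarrow> ((if k = 0 then p else 0) + ?r * y) / (1 + ?r)"
    if "(\<lambda>m. real (NkA_prev k (cmrt_seq w m)) / m) \<longlonglongrightarrow> y" for k y
  proof (rule LIMSEQ_div_of_linear_recursion[OF _ _ \<rho> p(1) lim_A that lim_mart[rule_format]])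
    show "real (NkA k (cmrt_seq w (Suc m))) = real (NkA k (cmrt_seq w m)) + (if k = 0 then p else 0)
        + ?\<rho> * (real (NkA_prev k (cmrt_seq w m)) - real (NkA k (cmrt_seq w m))) / real (num_A (cmrt_seq w m))
        + ((\<Sum>j<Suc m. NkA_mart_diff p q k j w) - (\<Sum>j<m. NkA_mart_diff p q k j w))" for m
      by (simp add: NkA_mart_diff_def NkA_drift_def)
    show "1 \<le> real (num_A (cmrt_seq w m))" for m by (simp add: num_A_cmrt_seq)
  qed
  show ?thesis
  proof (induction k)
    case 0
    with step[of 0 0] show ?case by (simp add: NkA_prev_0 degree_limit_0)
  next
    case (Suc k)
    with step[of "Suc k"] show ?case by (simp add: NkA_prev_Suc degree_limit_Suc)
  qed
qed

lemma filterlim_first_passage_at_top: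
  fixes J :: "nat \<Rightarrow> real"
  assumes mono: "mono J" and unbounded: "\<And>t. \<exists>m. t < J (Suc m)"
  shows "filterlim (\<lambda>t. LEAST m. t < J (Suc m)) at_top at_top"
proof (subst filterlim_at_top, intro allI)
  fix Z :: nat
  show "eventually (\<lambda>t. Z \<le> (LEAST m. t < J (Suc m))) at_top"
    using eventually_ge_at_top[of "J Z"]
  proof (rule eventually_mono)
    fix t assume t: "J Z \<le> t"
    show "Z \<le> (LEAST m. t < J (Suc m))"
    proof (rule ccontr)
      assume "\<not> Z \<le> (LEAST m. t < J (Suc m))"
      then have "J (Suc (LEAST m. t < J (Suc m))) \<le> J Z" by (intro monoD[OF mono]) simp
      moreover have "t < J (Suc (LEAST m. t < J (Suc m)))" using unbounded[of t] by (rule LeastI_ex)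
      ultimately show False using t by simp
    qed
  qed
qed

lemma mono_jump_time:
  fixes w :: "nat \<Rightarrow> step_rand"
  assumes "0 \<le> p" and "\<And>j. 0 \<le> snd (snd (snd (w j)))"
  shows "mono (jump_time p w)"
  by (rule incseq_SucI) (simp add: jump_time_def hold_def assms)

text \<open>Holding times are at least \<open>p E\<^sub>j / (j + 2)\<close>, and a positive fraction \<open>e\<^sup>-\<^sup>1\<close> of the
  \<open>E\<^sub>j\<close> exceed \<open>1\<close>, so the jump times diverge like a harmonic series.\<close>

lemma jump_time_unbounded:
  fixes w :: "nat \<Rightarrow> step_rand"
  assumes p: "0 < p" and E: "\<And>j. 0 \<le> snd (snd (snd (w j)))"
    and lim: "(\<lambda>m. (\<Sum>j<m. if 1 < snd (snd (snd (w j))) then 1 else 0 :: real) / m) \<longlonglongrightarrow> exp (-1)"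
  shows "\<exists>m. t < jump_time p w (Suc m)"
proof -
  let ?x = "\<lambda>j. if 1 < snd (snd (snd (w j))) then 1 else 0 :: real"
  obtain m where m: "t / p < (\<Sum>j<m. ?x j / (j + 2))"
    using weighted_sum_unbounded[OF _ lim] by fastforce
  have "p * (?x j / (j + 2)) \<le> hold p w j" for j
  proof -
    have N: "1 \<le> real (num_A (cmrt_seq w j))" "real (num_A (cmrt_seq w j)) \<le> real (j + 2)"
      using num_A_le_length[of "cmrt_seq w j"] by (simp_all add: num_A_cmrt_seq length_cmrt_seq)
    have "p * (?x j / (j + 2)) \<le> p * ?x j / real (num_A (cmrt_seq w j))"
      using N p by (simp add: frac_le)
    also have "\<dots> \<le> hold p w j"
      unfolding hold_def using N p E[of j] by (intro divide_right_mono mult_left_mono) auto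
    finally show ?thesis .
  qed
  then have "p * (\<Sum>j<m. ?x j / (j + 2)) \<le> jump_time p w m"
    unfolding jump_time_def sum_distrib_left by (rule sum_mono)
  moreover have "jump_time p w m \<le> jump_time p w (Suc m)"
    using mono_jump_time[OF less_imp_le[OF p] E] by (simp add: mono_def)
  ultimately have "t < jump_time p w (Suc m)" using m p by (simp add: field_simps)
  then show ?thesis ..
qed

section \<open>Almost sure limits\<close>

context
  fixes p q :: real
  assumes p: "0 < p" "p \<le> 1" and q: "0 \<le> q" "q \<le> 1"
begin

interpretation S: sequence_space "step_measure p q"
  by (rule sequence_space_step_measure)

lemma AE_valid_cmrt_seq:
  "AE w in cmrt_space p q. \<forall>j. valid_cmrt (cmrt_seq w j) \<and> 0 \<le> snd (snd (snd (w j)))"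
proof -
  have "AE w in cmrt_space p q. \<forall>i. 0 \<le> fst (snd (snd (w i))) \<and> fst (snd (snd (w i))) < 1
      \<and> 0 \<le> snd (snd (snd (w i)))"
    unfolding AE_all_countable cmrt_space_def by (intro allI S.AE_component UNIV_I AE_step_measure)
  then show ?thesis
  proof (rule eventually_mono)
    fix w :: "nat \<Rightarrow> step_rand"
    assume w: "\<forall>i. 0 \<le> fst (snd (snd (w i))) \<and> fst (snd (snd (w i))) < 1 \<and> 0 \<le> snd (snd (snd (w i)))"
    have "valid_cmrt (cmrt_seq w j)" for j
    proof (induction j)
      case (Suc j)
      obtain a s u e where wj: "w j = (a, s, u, e)" by (cases "w j") auto
      then have "0 \<le> u" "u < 1" using w by (metis fst_conv snd_conv)+
      then show ?case using valid_cmrt_add[OF Suc] wj by simp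
    qed (simp add: valid_cmrt_init)
    then show "\<forall>j. valid_cmrt (cmrt_seq w j) \<and> 0 \<le> snd (snd (snd (w j)))" using w by auto
  qed
qed

lemma AE_NkA_mart_diff_centered:
  "AE w in cmrt_space p q. (\<integral>x. NkA_mart_diff p q k j (w(j := x)) \<partial>step_measure p q) = 0"
  using AE_valid_cmrt_seq
proof (rule eventually_mono)
  fix w assume "\<forall>j. valid_cmrt (cmrt_seq w j) \<and> 0 \<le> snd (snd (snd (w j)))"
  then have valid: "valid_cmrt (cmrt_seq w j)" by auto
  let ?T = "cmrt_seq w j"
  have seq_upd: "cmrt_seq (w(j := x)) j = ?T" for x by (rule cmrt_seq_cong) auto
  have "integrable (step_measure p q) (\<lambda>x. real (NkA k (cmrt_add ?T x)))"
  proof (rule S.M.integrable_const_bound[where B = "real (NkA k ?T) + 2"])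
    show "AE x in step_measure p q. norm (real (NkA k (cmrt_add ?T x))) \<le> real (NkA k ?T) + 2"
    proof (rule AE_I2)
      fix x
      show "norm (real (NkA k (cmrt_add ?T x))) \<le> real (NkA k ?T) + 2"
        using abs_NkA_cmrt_add_diff_le[of k ?T x] by simp
    qed
  qed (use measurable_cmrt_add in measurable)
  then have "(\<integral>x. NkA_mart_diff p q k j (w(j := x)) \<partial>step_measure p q)
      = (\<integral>x. real (NkA k (cmrt_add ?T x)) \<partial>step_measure p q) - (real (NkA k ?T) + NkA_drift p q k ?T)"
    unfolding NkA_mart_diff_def by (simp add: seq_upd S.M.prob_space algebra_simps)
  also have "\<dots> = 0" using integral_NkA_cmrt_add[OF valid] p q by simp
  finally show "(\<integral>x. NkA_mart_diff p q k j (w(j := x)) \<partial>step_measure p q) = 0" .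
qed

lemma AE_NkA_mart_average_tendsto_0:
  "AE w in cmrt_space p q. \<forall>k. (\<lambda>m. (\<Sum>j<m. NkA_mart_diff p q k j w) / m) \<longlonglongrightarrow> 0"
  unfolding AE_all_countable
proof
  fix k
  show "AE w in cmrt_space p q. (\<lambda>m. (\<Sum>j<m. NkA_mart_diff p q k j w) / m) \<longlonglongrightarrow> 0"
    unfolding cmrt_space_def
    using abs_NkA_mart_diff_le p q NkA_mart_diff_cong AE_NkA_mart_diff_centered[unfolded cmrt_space_def]
      measurable_NkA_mart_diff[unfolded cmrt_space_def]
    by (intro S.AE_martingale_average_tendsto_0[where B = 4]) auto
qed

lemma AE_num_A_average: "AE w in cmrt_space p q. (\<lambda>m. real (num_A (cmrt_seq w m)) / m) \<longlonglongrightarrow> p"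
proof -
  have "AE w in cmrt_space p q.
      (\<lambda>m. (\<Sum>j<m. if fst (w j) then 1 else 0 :: real) / m)
        \<longlonglongrightarrow> (\<integral>x. (if fst x then 1 else 0 :: real) \<partial>step_measure p q)"
    unfolding cmrt_space_def by (rule S.AE_iid_average_tendsto[where B = 1]) (auto simp: step_measure_def)
  then show ?thesis
    unfolding integral_step_measure_type_A[OF less_imp_le[OF p(1)] p(2)]
  proof (rule eventually_mono)
    fix w :: "nat \<Rightarrow> step_rand"
    assume lim: "(\<lambda>m. (\<Sum>j<m. if fst (w j) then 1 else 0 :: real) / m) \<longlonglongrightarrow> p"
    have "(\<lambda>m. (\<Sum>j<m. if fst (w j) then 1 else 0 :: real) / m + 1 / m) \<longlonglongrightarrow> p + 0"
      by (intro tendsto_add lim lim_const_over_n)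
    moreover have "(\<Sum>j<m. if fst (w j) then 1 else 0 :: real) / m + 1 / m = real (num_A (cmrt_seq w m)) / m" for m
      by (simp add: num_A_cmrt_seq sum.If_cases add_divide_distrib lessThan_def Collect_conj_eq)
    ultimately show "(\<lambda>m. real (num_A (cmrt_seq w m)) / m) \<longlonglongrightarrow> p" by simp
  qed
qed

lemma AE_exp_tail_average:
  "AE w in cmrt_space p q. (\<lambda>m. (\<Sum>j<m. if 1 < snd (snd (snd (w j))) then 1 else 0 :: real) / m) \<longlonglongrightarrow> exp (-1)"
proof -
  have "AE w in cmrt_space p q.
      (\<lambda>m. (\<Sum>j<m. if 1 < snd (snd (snd (w j))) then 1 else 0 :: real) / m)
        \<longlonglongrightarrow> (\<integral>x. (if 1 < snd (snd (snd x)) then 1 else 0 :: real) \<partial>step_measure p q)"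
    unfolding cmrt_space_def by (rule S.AE_iid_average_tendsto[where B = 1]) (auto simp: step_measure_def)
  then show ?thesis unfolding integral_step_measure_exp_tail .
qed

lemma AE_NkA_fraction_LIMSEQ:
  "AE w in cmrt_space p q.
     (\<lambda>m. real (NkA k (cmrt_seq w m)) / real (m + 2)) \<longlonglongrightarrow> degree_limit p (attach_A_prob p q / p) k"
  using AE_num_A_average AE_NkA_mart_average_tendsto_0
proof eventually_elim
  case (elim w)
  have "(\<lambda>m. 2 / real (m + 2)) \<longlonglongrightarrow> 0"
    using LIMSEQ_ignore_initial_segment[OF lim_const_over_n[of 2], of 2] by simp
  then have "(\<lambda>m. 1 - 2 / real (m + 2)) \<longlonglongrightarrow> 1 - 0" by (intro tendsto_diff tendsto_const)
  moreover have "1 - 2 / real (m + 2) = real m / real (m + 2)" for m by (simp add: field_simps)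
  ultimately have "(\<lambda>m. real (NkA k (cmrt_seq w m)) / m * (real m / real (m + 2)))
      \<longlonglongrightarrow> degree_limit p (attach_A_prob p q / p) k * 1"
    using NkA_div_LIMSEQ[OF p q elim] by (intro tendsto_mult) simp_all
  then have "(\<lambda>m. real (NkA k (cmrt_seq w m)) / m * (real m / real (m + 2)))
      \<longlonglongrightarrow> degree_limit p (attach_A_prob p q / p) k" by simp
  moreover have "\<forall>\<^sub>F m in sequentially. real (NkA k (cmrt_seq w m)) / m * (real m / real (m + 2))
      = real (NkA k (cmrt_seq w m)) / real (m + 2)"
    using eventually_gt_at_top[of 0] by eventually_elim simp
  ultimately show ?case by (rule Lim_transform_eventually)
qed

lemma AE_bp_fraction_tendsto:
  "AE w in cmrt_space p q.
     ((\<lambda>t. real (NkA k (bp_state p w t)) / real (length (bp_state p w t)))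
       \<longlongrightarrow> degree_limit p (attach_A_prob p q / p) k) at_top"
  using AE_NkA_fraction_LIMSEQ[of k] AE_valid_cmrt_seq AE_exp_tail_average
proof eventually_elim
  case (elim w)
  then have E: "\<And>j. 0 \<le> snd (snd (snd (w j)))" by blast
  have "filterlim (\<lambda>t. LEAST m. t < jump_time p w (Suc m)) at_top at_top"
    using mono_jump_time[OF less_imp_le[OF p(1)] E] jump_time_unbounded[OF p(1) E elim(3)]
    by (rule filterlim_first_passage_at_top)
  from filterlim_compose[OF elim(1) this] show ?case
    unfolding bp_state_def length_cmrt_seq by simp
qed

lemma AE_tree_fraction_LIMSEQ:
  "AE w in cmrt_space p q.
     (\<lambda>n. real (NkA k (cmrt_tree w n)) / real n) \<longlonglongrightarrow> degree_limit p (attach_A_prob p q / p) k"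
  using AE_NkA_fraction_LIMSEQ[of k]
proof (rule eventually_mono)
  fix w assume "(\<lambda>m. real (NkA k (cmrt_seq w m)) / real (m + 2)) \<longlonglongrightarrow> degree_limit p (attach_A_prob p q / p) k"
  then have "(\<lambda>n. real (NkA k (cmrt_tree w (n + 2))) / real (n + 2)) \<longlonglongrightarrow> degree_limit p (attach_A_prob p q / p) k"
    unfolding cmrt_tree_def by simp
  then show "(\<lambda>n. real (NkA k (cmrt_tree w n)) / real n) \<longlonglongrightarrow> degree_limit p (attach_A_prob p q / p) k"
    by (rule LIMSEQ_offset)
qed

end

theorem theorem5p4:
  fixes p q :: real and k :: nat
  assumes "0 < k" and "0 < p" and "p \<le> 1" and "0 \<le> q" and "q \<le> 1"
  defines "r \<equiv> q + (1 - p) * (1 - q) / p"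
  defines "pk \<equiv> p / (1 + r) * (r / (1 + r)) ^ k"
  defines "M \<equiv> cmrt_space p q"
  shows "pk = p * (LINT s:{0..}|lborel. poisson_prob (r * s) k * exp (- s))
    \<and> (\<forall>t. (\<lambda>w. real (NkA k (bp_state p w t)) / real (length (bp_state p w t)))
               \<in> borel_measurable M)
    \<and> (\<forall>\<epsilon>>0. ((\<lambda>t. measure M {w \<in> space M.
               \<bar>real (NkA k (bp_state p w t)) / real (length (bp_state p w t)) - pk\<bar> > \<epsilon>})
             \<longlongrightarrow> 0) at_top)
    \<and> (\<forall>n. (\<lambda>w. real (NkA k (cmrt_tree w n)) / real n) \<in> borel_measurable M)
    \<and> (\<forall>\<epsilon>>0. ((\<lambda>n. measure M {w \<in> space M.
               \<bar>real (NkA k (cmrt_tree w n)) / real n - pk\<bar> > \<epsilon>})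
             \<longlongrightarrow> 0) sequentially)"
proof -
  have p: "0 < p" "p \<le> 1" and q: "0 \<le> q" "q \<le> 1" using assms by auto
  interpret M: prob_space M unfolding M_def by (rule prob_space_cmrt_space)
  have r: "r = attach_A_prob p q / p"
    unfolding r_def attach_A_prob_def using p by (simp add: field_simps)
  then have "0 \<le> r" using attach_A_prob_bounds p q by simp
  have pk: "pk = degree_limit p r k" unfolding pk_def degree_limit_def ..
  note bp_meas = measurable_NkA_fraction_bp_state[of k p _ q, folded M_def]
  note tree_meas = measurable_NkA_fraction_cmrt_tree[of k _ p q, folded M_def]
  show ?thesis
  proof (intro conjI allI impI bp_meas tree_meas)
    show "pk = p * (LINT s:{0..}|lborel. poisson_prob (r * s) k * exp (- s))"
      unfolding pk_def integral_poisson_prob_exp[OF \<open>0 \<le> r\<close>] by (simp add: power_divide)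
  next
    fix \<epsilon> :: real assume "0 < \<epsilon>"
    show "((\<lambda>t. measure M {w \<in> space M.
        \<bar>real (NkA k (bp_state p w t)) / real (length (bp_state p w t)) - pk\<bar> > \<epsilon>}) \<longlongrightarrow> 0) at_top"
      using AE_bp_fraction_tendsto[OF p q] unfolding pk r M_def[symmetric]
      by (intro M.AE_tendsto_at_top_imp_tendsto_in_probability bp_meas \<open>0 < \<epsilon>\<close>)
    show "(\<lambda>n. measure M {w \<in> space M. \<bar>real (NkA k (cmrt_tree w n)) / real n - pk\<bar> > \<epsilon>}) \<longlonglongrightarrow> 0"
      using AE_tree_fraction_LIMSEQ[OF p q] unfolding pk r M_def[symmetric]
      by (intro M.AE_LIMSEQ_imp_LIMSEQ_in_probability tree_meas \<open>0 < \<epsilon>\<close>)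
  qed
qed

end
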